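(* Let $\omega$ be a primitive third root of unity and let $S=\mathbb{C}\langle x,y,z\rangle/(x^2,y^2,z^2)$, graded by $\deg x=\deg y=\deg z=1$. For $t\in\mathbb{C}^*$ (i.e. $t\neq 0,\infty$), let $T_t$ be the quotient of $S$ by the two-sided ideal generated by $$v_1=(zxy+\omega xyz+\omega^2 yzx)+t\,(yxz+\omega zyx+\omega^2 xzy),\qquad v_2=(zxy+\omega^2 xyz+\omega yzx)+t\,(yxz+\omega^2 zyx+\omega xzy).$$ Then $T_t$ has Hilbert series $H_{T_t}(s)=\sum_{k\ge 0}\dim (T_t)_k\, s^k=\frac{1}{(1-s)^3}$.
   Context: The Hilbert series of a connected positively graded algebra $A$ is $H_A(s)=\sum_k \dim A_k s^k$. *)

theory Defs
  imports "HOL-Analysis.Analysis" "HOL-Library.Function_Algebras"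
    "HOL-Computational_Algebra.Formal_Power_Series"
begin

text \<open>Noncommutative polynomials in the letters x = 0, y = 1, z = 2 over the complex
numbers are represented as coefficient functions on words (nat lists); addition,
zero and negation are pointwise (Function_Algebras).\<close>

type_synonym ncp = "nat list \<Rightarrow> complex"

definition nc_scale :: "complex \<Rightarrow> ncp \<Rightarrow> ncp" where
  "nc_scale c f = (\<lambda>w. c * f w)"

definition nc_mult :: "ncp \<Rightarrow> ncp \<Rightarrow> ncp" where
  "nc_mult f g = (\<lambda>w. \<Sum>i\<le>length w. f (take i w) * g (drop i w))"

definition nc_mon :: "nat list \<Rightarrow> ncp" where
  "nc_mon u = (\<lambda>w. if w = u then 1 else 0)"

definition ncpoly :: "ncp set" where
  "ncpoly = {f. finite {w. f w \<noteq> 0} \<and> (\<forall>w. f w \<noteq> 0 \<longrightarrow> set w \<subseteq> {0,1,2})}"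

definition ncpoly_deg :: "nat \<Rightarrow> ncp set" where
  "ncpoly_deg k = {f \<in> ncpoly. \<forall>w. f w \<noteq> 0 \<longrightarrow> length w = k}"

definition nc_ideal :: "ncp set \<Rightarrow> ncp set" where
  "nc_ideal G = module.span nc_scale
     {nc_mult (nc_mult a g) b | a g b. a \<in> ncpoly \<and> g \<in> G \<and> b \<in> ncpoly}"

definition quot_dim :: "ncp set \<Rightarrow> nat \<Rightarrow> nat" where
  "quot_dim G k = vector_space.dim nc_scale (ncpoly_deg k)
                 - vector_space.dim nc_scale (nc_ideal G \<inter> ncpoly_deg k)"

definition hilbert_series :: "ncp set \<Rightarrow> complex fps" where
  "hilbert_series G = Abs_fps (\<lambda>k. of_nat (quot_dim G k))"

abbreviation X :: ncp where "X \<equiv> nc_mon [0]"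
abbreviation Y :: ncp where "Y \<equiv> nc_mon [1]"
abbreviation Z :: ncp where "Z \<equiv> nc_mon [2]"

definition nc_prod3 :: "ncp \<Rightarrow> ncp \<Rightarrow> ncp \<Rightarrow> ncp" where
  "nc_prod3 a b c = nc_mult (nc_mult a b) c"

definition v1 :: "complex \<Rightarrow> complex \<Rightarrow> ncp" where
  "v1 \<omega> t =
     (nc_prod3 Z X Y + nc_scale \<omega> (nc_prod3 X Y Z) + nc_scale (\<omega>^2) (nc_prod3 Y Z X))
     + nc_scale t (nc_prod3 Y X Z + nc_scale \<omega> (nc_prod3 Z Y X) + nc_scale (\<omega>^2) (nc_prod3 X Z Y))"

definition v2 :: "complex \<Rightarrow> complex \<Rightarrow> ncp" where
  "v2 \<omega> t =
     (nc_prod3 Z X Y + nc_scale (\<omega>^2) (nc_prod3 X Y Z) + nc_scale \<omega> (nc_prod3 Y Z X))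
     + nc_scale t (nc_prod3 Y X Z + nc_scale (\<omega>^2) (nc_prod3 Z Y X) + nc_scale \<omega> (nc_prod3 X Z Y))"

definition T_rels :: "complex \<Rightarrow> complex \<Rightarrow> ncp set" where
  "T_rels \<omega> t = {nc_mult X X, nc_mult Y Y, nc_mult Z Z, v1 \<omega> t, v2 \<omega> t}"

end

theory Submission
  imports Defs
begin

text \<open>
  The squares of the letters together with \<open>v\<^sub>1, v\<^sub>2\<close> generate the same ideal as the squares
  together with two \<open>\<omega>\<close>-free cubic relations \<open>r\<^sub>1, r\<^sub>2\<close>. Modulo these, the quadratic elements
  \<open>\<alpha> = xy - t yx\<close>, \<open>\<beta> = yz - t zy\<close>, \<open>\<gamma> = zx - t xz\<close> skew-commute with the letters and with each
  other, so every word of degree \<open>k\<close> reduces to a combination of the elements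
  \<open>\<alpha>\<^sup>i \<beta>\<^sup>j \<gamma>\<^sup>l x\<^sup>e\<^sup>1 y\<^sup>e\<^sup>2 z\<^sup>e\<^sup>3\<close> with \<open>2(i + j + l) + e\<^sub>1 + e\<^sub>2 + e\<^sub>3 = k\<close>; these are indexed by the
  \<open>(k + 1)(k + 2)/2\<close> exponent triples \<open>(2i + e\<^sub>1, 2j + e\<^sub>2, 2l + e\<^sub>3)\<close>. Conversely, an explicit
  representation of the free algebra on functions of \<open>(i, j, l, e\<^sub>1, e\<^sub>2, e\<^sub>3) \<in> \<int>\<^sup>3 \<times> {0,1}\<^sup>3\<close> kills
  the relations and separates as many monomials of degree \<open>k\<close>, which are therefore independent
  modulo the ideal. Hence \<open>dim (T\<^sub>t)\<^sub>k = (k + 1)(k + 2)/2\<close>, the coefficient of \<open>s\<^sup>k\<close> in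
  \<open>1/(1 - s)\<^sup>3\<close>.
\<close>

notation nc_mult (infixl "\<odot>" 70)
notation nc_scale (infixr "*:" 75)

lemma sum_fun_apply: "(sum f A) x = (\<Sum>a\<in>A. f a x)"
  by (induction A rule: infinite_finite_induct) auto

lemma nc_mult_add_left: "(f + g) \<odot> h = f \<odot> h + g \<odot> h"
  by (simp add: nc_mult_def fun_eq_iff algebra_simps sum.distrib)

lemma nc_mult_add_right: "h \<odot> (f + g) = h \<odot> f + h \<odot> g"
  by (simp add: nc_mult_def fun_eq_iff algebra_simps sum.distrib)

lemma nc_mult_diff_left: "(f - g) \<odot> h = f \<odot> h - g \<odot> h"
  by (simp add: nc_mult_def fun_eq_iff algebra_simps sum_subtractf)

lemma nc_mult_diff_right: "h \<odot> (f - g) = h \<odot> f - h \<odot> g"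
  by (simp add: nc_mult_def fun_eq_iff algebra_simps sum_subtractf)

lemma nc_mult_scale_left: "(c *: f) \<odot> h = c *: (f \<odot> h)"
  by (simp add: nc_mult_def nc_scale_def fun_eq_iff sum_distrib_left mult.assoc)

lemma nc_mult_scale_right: "h \<odot> (c *: f) = c *: (h \<odot> f)"
  by (simp add: nc_mult_def nc_scale_def fun_eq_iff sum_distrib_left algebra_simps)

lemma nc_mult_zero_left: "0 \<odot> h = 0"
  by (simp add: nc_mult_def fun_eq_iff)

lemma nc_mult_zero_right: "h \<odot> 0 = 0"
  by (simp add: nc_mult_def fun_eq_iff)

lemma nc_mult_uminus_right: "h \<odot> (- f) = - (h \<odot> f)"
  by (simp add: nc_mult_def fun_eq_iff sum_negf)

lemma nc_scale_add: "c *: (f + g) = c *: f + c *: g"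
  by (simp add: nc_scale_def fun_eq_iff algebra_simps)

lemma nc_scale_diff: "c *: (f - g) = c *: f - c *: g"
  by (simp add: nc_scale_def fun_eq_iff algebra_simps)

lemma nc_scale_scale: "c *: (d *: f) = (c * d) *: f"
  by (simp add: nc_scale_def fun_eq_iff algebra_simps)

lemma nc_scale_one: "1 *: f = f"
  by (simp add: nc_scale_def fun_eq_iff)

interpretation ncv: vector_space nc_scale
  by unfold_locales (simp_all add: nc_scale_def fun_eq_iff algebra_simps)

lemma nc_mon_Nil_mult: "nc_mon [] \<odot> f = f"
proof
  fix w
  have "(nc_mon [] \<odot> f) w = (\<Sum>i\<le>length w. if i = 0 then f w else 0)"
    unfolding nc_mult_def nc_mon_def by (intro sum.cong) auto
  then show "(nc_mon [] \<odot> f) w = f w" by (simp add: sum.delta)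
qed

lemma nc_mult_mon_Nil: "f \<odot> nc_mon [] = f"
proof
  fix w
  have "(f \<odot> nc_mon []) w = (\<Sum>i\<le>length w. if i = length w then f w else 0)"
    unfolding nc_mult_def nc_mon_def by (intro sum.cong) auto
  then show "(f \<odot> nc_mon []) w = f w" by (simp add: sum.delta)
qed

lemma nc_mon_mult: "nc_mon u \<odot> nc_mon v = nc_mon (u @ v)"
proof
  fix w
  have split: "(take i w = u \<and> drop i w = v) \<longleftrightarrow> (i = length u \<and> w = u @ v)" if "i \<le> length w" for i
  proof
    assume "take i w = u \<and> drop i w = v"
    with that show "i = length u \<and> w = u @ v"
      by (metis append_take_drop_id length_take min_absorb2)
  qed auto
  have "(nc_mon u \<odot> nc_mon v) w = (\<Sum>i\<le>length w. if i = length u \<and> w = u @ v then 1 else 0)"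
    unfolding nc_mult_def nc_mon_def by (intro sum.cong refl) (auto simp: split[symmetric])
  also have "\<dots> = nc_mon (u @ v) w"
    by (cases "w = u @ v") (simp_all add: nc_mon_def)
  finally show "(nc_mon u \<odot> nc_mon v) w = nc_mon (u @ v) w" .
qed

lemma nc_mult_assoc: "(f \<odot> g) \<odot> h = f \<odot> (g \<odot> h)"
proof -
  have "((f \<odot> g) \<odot> h) w = (f \<odot> (g \<odot> h)) w" for w
  proof -
    define n where "n = length w"
    define F where "F j i = f (take j w) * g (take (i - j) (drop j w)) * h (drop i w)" for j i
    have "((f \<odot> g) \<odot> h) w = (\<Sum>i\<le>n. \<Sum>j\<le>i. F j i)"
      unfolding nc_mult_def n_def
    proof (intro sum.cong refl)
      fix i assume "i \<in> {..length w}"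
      then have "length (take i w) = i" by simp
      then show "(\<Sum>j\<le>length (take i w). f (take j (take i w)) * g (drop j (take i w))) * h (drop i w)
          = (\<Sum>j\<le>i. F j i)"
        unfolding sum_distrib_right by (intro sum.cong) (simp_all add: F_def take_take drop_take min_def)
    qed
    also have "\<dots> = (\<Sum>i\<le>n. \<Sum>j\<le>i. F j (j + (i - j)))"
      by (intro sum.cong refl) simp
    also have "\<dots> = (\<Sum>(j, b)\<in>{(j, b). j + b \<le> n}. F j (j + b))"
      by (rule sum.triangle_reindex_eq[symmetric])
    also have "{(j, b). j + b \<le> n} = Sigma {..n} (\<lambda>j. {..n - j})"
      by auto
    also have "(\<Sum>(j, b)\<in>Sigma {..n} (\<lambda>j. {..n - j}). F j (j + b)) = (\<Sum>j\<le>n. \<Sum>b\<le>n - j. F j (j + b))"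
      by (simp add: sum.Sigma)
    also have "\<dots> = (f \<odot> (g \<odot> h)) w"
      unfolding nc_mult_def n_def sum_distrib_left length_drop
      by (intro sum.cong refl) (simp add: F_def mult.assoc add.commute)
    finally show ?thesis .
  qed
  then show ?thesis by auto
qed

definition nc_supp :: "ncp \<Rightarrow> nat list set" where
  "nc_supp f = {w. f w \<noteq> 0}"

lemma nc_mult_nonzero:
  assumes "(f \<odot> g) w \<noteq> 0"
  obtains i where "i \<le> length w" "f (take i w) \<noteq> 0" "g (drop i w) \<noteq> 0"
proof (rule ccontr)
  assume "\<not> thesis"
  with that have "(f \<odot> g) w = 0"
    unfolding nc_mult_def by (intro sum.neutral) auto
  with assms show False ..
qed

lemma nc_supp_mult: "nc_supp (f \<odot> g) \<subseteq> (\<lambda>(u, v). u @ v) ` (nc_supp f \<times> nc_supp g)"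
proof
  fix w assume "w \<in> nc_supp (f \<odot> g)"
  then obtain i where "f (take i w) \<noteq> 0" "g (drop i w) \<noteq> 0"
    unfolding nc_supp_def by (auto elim: nc_mult_nonzero)
  then show "w \<in> (\<lambda>(u, v). u @ v) ` (nc_supp f \<times> nc_supp g)"
    unfolding nc_supp_def by (intro image_eqI[of _ _ "(take i w, drop i w)"]) auto
qed

lemma ncpoly_iff: "f \<in> ncpoly \<longleftrightarrow> finite (nc_supp f) \<and> (\<forall>w. f w \<noteq> 0 \<longrightarrow> set w \<subseteq> {0,1,2})"
  by (simp add: ncpoly_def nc_supp_def)

lemma nc_supp_mon: "nc_supp (nc_mon w) = {w}"
  by (auto simp: nc_supp_def nc_mon_def)

lemma ncpoly_mon [simp]: "set w \<subseteq> {0,1,2} \<Longrightarrow> nc_mon w \<in> ncpoly"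
  unfolding ncpoly_iff nc_supp_mon by (simp add: nc_mon_def)

lemma ncpoly_add [simp, intro]: "f \<in> ncpoly \<Longrightarrow> g \<in> ncpoly \<Longrightarrow> f + g \<in> ncpoly"
proof -
  assume f: "f \<in> ncpoly" and g: "g \<in> ncpoly"
  have "nc_supp (f + g) \<subseteq> nc_supp f \<union> nc_supp g"
    by (auto simp: nc_supp_def)
  with f g have "finite (nc_supp (f + g))"
    by (auto simp: ncpoly_iff intro: finite_subset)
  moreover have "set w \<subseteq> {0,1,2}" if "(f + g) w \<noteq> 0" for w
  proof -
    have "f w \<noteq> 0 \<or> g w \<noteq> 0" using that by auto
    then show ?thesis using f g unfolding ncpoly_iff by blast
  qed
  ultimately show ?thesis by (simp add: ncpoly_iff)
qed

lemma ncpoly_scale [simp, intro]: "f \<in> ncpoly \<Longrightarrow> c *: f \<in> ncpoly"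
proof -
  assume f: "f \<in> ncpoly"
  have "nc_supp (c *: f) \<subseteq> nc_supp f" by (auto simp: nc_supp_def nc_scale_def)
  with f show ?thesis unfolding ncpoly_iff by (auto intro: finite_subset simp: nc_scale_def)
qed

lemma ncpoly_uminus [simp, intro]: "f \<in> ncpoly \<Longrightarrow> - f \<in> ncpoly"
proof -
  assume f: "f \<in> ncpoly"
  have "nc_supp (- f) = nc_supp f" by (auto simp: nc_supp_def)
  with f show ?thesis unfolding ncpoly_iff by auto
qed

lemma ncpoly_diff [simp, intro]: "f \<in> ncpoly \<Longrightarrow> g \<in> ncpoly \<Longrightarrow> f - g \<in> ncpoly"
  using ncpoly_add[of f "- g"] by simp

lemma ncpoly_zero [simp, intro]: "0 \<in> ncpoly"
  by (simp add: ncpoly_iff nc_supp_def)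

lemma ncpoly_mult [simp, intro]: "f \<in> ncpoly \<Longrightarrow> g \<in> ncpoly \<Longrightarrow> f \<odot> g \<in> ncpoly"
proof -
  assume f: "f \<in> ncpoly" and g: "g \<in> ncpoly"
  have "finite (nc_supp (f \<odot> g))"
    using f g nc_supp_mult[of f g] by (auto simp: ncpoly_iff intro: finite_subset)
  moreover have "set w \<subseteq> {0,1,2}" if nz: "(f \<odot> g) w \<noteq> 0" for w
  proof -
    obtain i where "f (take i w) \<noteq> 0" "g (drop i w) \<noteq> 0"
      using nc_mult_nonzero[OF nz] by blast
    then have "set (take i w) \<subseteq> {0,1,2}" "set (drop i w) \<subseteq> {0,1,2}"
      using f g by (auto simp: ncpoly_iff)
    then show ?thesis by (metis append_take_drop_id le_sup_iff set_append)
  qed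
  ultimately show ?thesis by (simp add: ncpoly_iff)
qed

lemma ncpoly_sum: "(\<And>a. a \<in> A \<Longrightarrow> h a \<in> ncpoly) \<Longrightarrow> sum h A \<in> ncpoly"
  by (induction A rule: infinite_finite_induct) auto

lemma ncpoly_eq_sum_mon:
  assumes "f \<in> ncpoly"
  shows "f = (\<Sum>w\<in>nc_supp f. f w *: nc_mon w)"
proof -
  have "(\<Sum>w\<in>nc_supp f. f w *: nc_mon w) x = (\<Sum>w\<in>nc_supp f. if w = x then f x else 0)" for x
    unfolding sum_fun_apply by (intro sum.cong refl) (auto simp: nc_scale_def nc_mon_def)
  with assms show ?thesis by (simp add: fun_eq_iff sum.delta' nc_supp_def ncpoly_iff)
qed

lemma ncpoly_deg_iff: "f \<in> ncpoly_deg k \<longleftrightarrow> f \<in> ncpoly \<and> (\<forall>w. f w \<noteq> 0 \<longrightarrow> length w = k)"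
  by (simp add: ncpoly_deg_def)

lemma ncpoly_deg_mon: "set w \<subseteq> {0,1,2} \<Longrightarrow> length w = k \<Longrightarrow> nc_mon w \<in> ncpoly_deg k"
  using ncpoly_mon[of w] by (auto simp: ncpoly_deg_iff nc_mon_def split: if_splits)

lemma ncpoly_deg_add: "f \<in> ncpoly_deg k \<Longrightarrow> g \<in> ncpoly_deg k \<Longrightarrow> f + g \<in> ncpoly_deg k"
  by (auto simp: ncpoly_deg_iff) (metis add.right_neutral add_0)

lemma ncpoly_deg_zero: "0 \<in> ncpoly_deg k"
  by (simp add: ncpoly_deg_iff)

lemma ncpoly_deg_scale: "f \<in> ncpoly_deg k \<Longrightarrow> c *: f \<in> ncpoly_deg k"
  using ncpoly_scale[of f c] by (auto simp: ncpoly_deg_iff nc_scale_def)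

lemma ncpoly_deg_diff: "f \<in> ncpoly_deg k \<Longrightarrow> g \<in> ncpoly_deg k \<Longrightarrow> f - g \<in> ncpoly_deg k"
  using ncpoly_deg_add[of f k "- g"] by (auto simp: ncpoly_deg_iff)

lemma ncpoly_deg_mult: "f \<in> ncpoly_deg a \<Longrightarrow> g \<in> ncpoly_deg b \<Longrightarrow> f \<odot> g \<in> ncpoly_deg (a + b)"
proof -
  assume f: "f \<in> ncpoly_deg a" and g: "g \<in> ncpoly_deg b"
  have "length w = a + b" if nz: "(f \<odot> g) w \<noteq> 0" for w
  proof -
    obtain i where "i \<le> length w" "f (take i w) \<noteq> 0" "g (drop i w) \<noteq> 0"
      using nc_mult_nonzero[OF nz] by blast
    moreover from this f g have "length (take i w) = a" "length (drop i w) = b"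
      by (auto simp: ncpoly_deg_iff)
    ultimately show ?thesis by simp
  qed
  with f g show ?thesis by (auto simp: ncpoly_deg_iff)
qed

lemma ncpoly_deg_subspace: "ncv.subspace (ncpoly_deg k)"
  unfolding ncv.subspace_def by (auto intro: ncpoly_deg_add ncpoly_deg_scale ncpoly_deg_zero)

definition words :: "nat \<Rightarrow> nat list set" where
  "words k = {w. set w \<subseteq> {0,1,2} \<and> length w = k}"

lemma finite_words: "finite (words k)"
  unfolding words_def by (rule finite_lists_length_eq) simp

lemma ncpoly_deg_subset_span_words: "ncpoly_deg k \<subseteq> ncv.span (nc_mon ` words k)"
proof
  fix f assume f: "f \<in> ncpoly_deg k"
  then have "nc_supp f \<subseteq> words k"
    by (auto simp: ncpoly_deg_iff ncpoly_iff nc_supp_def words_def)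
  then have "(\<Sum>w\<in>nc_supp f. f w *: nc_mon w) \<in> ncv.span (nc_mon ` words k)"
    by (intro ncv.span_sum ncv.span_scale ncv.span_base) auto
  moreover have "f = (\<Sum>w\<in>nc_supp f. f w *: nc_mon w)"
    using f by (intro ncpoly_eq_sum_mon) (simp add: ncpoly_deg_iff)
  ultimately show "f \<in> ncv.span (nc_mon ` words k)" by metis
qed

lemma nc_ideal_generator:
  "a \<in> ncpoly \<Longrightarrow> g \<in> G \<Longrightarrow> b \<in> ncpoly \<Longrightarrow> a \<odot> g \<odot> b \<in> nc_ideal G"
  unfolding nc_ideal_def by (rule ncv.span_base) blast

lemma nc_ideal_subset:
  assumes "ncv.subspace S" and "\<And>a g b. a \<in> ncpoly \<Longrightarrow> g \<in> G \<Longrightarrow> b \<in> ncpoly \<Longrightarrow> a \<odot> g \<odot> b \<in> S"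
  shows "nc_ideal G \<subseteq> S"
  unfolding nc_ideal_def using assms by (intro ncv.span_minimal) auto

lemma nc_ideal_subspace: "ncv.subspace (nc_ideal G)"
  unfolding nc_ideal_def by (rule ncv.subspace_span)

lemma nc_ideal_zero: "0 \<in> nc_ideal G"
  and nc_ideal_add: "f \<in> nc_ideal G \<Longrightarrow> g \<in> nc_ideal G \<Longrightarrow> f + g \<in> nc_ideal G"
  and nc_ideal_diff: "f \<in> nc_ideal G \<Longrightarrow> g \<in> nc_ideal G \<Longrightarrow> f - g \<in> nc_ideal G"
  and nc_ideal_scale: "f \<in> nc_ideal G \<Longrightarrow> c *: f \<in> nc_ideal G"
  and nc_ideal_uminus: "f \<in> nc_ideal G \<Longrightarrow> - f \<in> nc_ideal G"
  unfolding nc_ideal_def by (auto intro: ncv.span_zero ncv.span_add ncv.span_diff ncv.span_scale ncv.span_neg)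

lemma generator_in_nc_ideal: "g \<in> G \<Longrightarrow> g \<in> nc_ideal G"
  using nc_ideal_generator[of "nc_mon []" g G "nc_mon []"] by (simp add: nc_mon_Nil_mult nc_mult_mon_Nil)

lemma nc_ideal_mult_left:
  assumes "c \<in> ncpoly" "f \<in> nc_ideal G"
  shows "c \<odot> f \<in> nc_ideal G"
proof -
  have "nc_ideal G \<subseteq> {f. c \<odot> f \<in> nc_ideal G}"
  proof (rule nc_ideal_subset)
    show "ncv.subspace {f. c \<odot> f \<in> nc_ideal G}"
      unfolding ncv.subspace_def mem_Collect_eq
      by (simp add: nc_mult_zero_right nc_mult_add_right nc_mult_scale_right
          nc_ideal_zero nc_ideal_add nc_ideal_scale)
    show "a \<odot> g \<odot> b \<in> {f. c \<odot> f \<in> nc_ideal G}" if "a \<in> ncpoly" "g \<in> G" "b \<in> ncpoly" for a g b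
      using nc_ideal_generator[of "c \<odot> a" g G b] that assms(1) by (simp add: nc_mult_assoc)
  qed
  with assms(2) show ?thesis by blast
qed

lemma nc_ideal_mult_right:
  assumes "c \<in> ncpoly" "f \<in> nc_ideal G"
  shows "f \<odot> c \<in> nc_ideal G"
proof -
  have "nc_ideal G \<subseteq> {f. f \<odot> c \<in> nc_ideal G}"
  proof (rule nc_ideal_subset)
    show "ncv.subspace {f. f \<odot> c \<in> nc_ideal G}"
      unfolding ncv.subspace_def mem_Collect_eq
      by (simp add: nc_mult_zero_left nc_mult_add_left nc_mult_scale_left
          nc_ideal_zero nc_ideal_add nc_ideal_scale)
    show "a \<odot> g \<odot> b \<in> {f. f \<odot> c \<in> nc_ideal G}" if "a \<in> ncpoly" "g \<in> G" "b \<in> ncpoly" for a g b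
      using nc_ideal_generator[of a g G "b \<odot> c"] that assms(1) by (simp add: nc_mult_assoc)
  qed
  with assms(2) show ?thesis by blast
qed

definition nc_cong :: "ncp set \<Rightarrow> ncp \<Rightarrow> ncp \<Rightarrow> bool" where
  "nc_cong G f g \<longleftrightarrow> f - g \<in> nc_ideal G"

lemma nc_cong_refl [simp]: "nc_cong G f f"
  by (simp add: nc_cong_def nc_ideal_zero)

lemma nc_cong_trans [trans]: "nc_cong G f g \<Longrightarrow> nc_cong G g h \<Longrightarrow> nc_cong G f h"
  unfolding nc_cong_def using nc_ideal_add by fastforce

lemma nc_cong_eq_trans [trans]: "a = b \<Longrightarrow> nc_cong G b c \<Longrightarrow> nc_cong G a c"
  and nc_cong_trans_eq [trans]: "nc_cong G a b \<Longrightarrow> b = c \<Longrightarrow> nc_cong G a c"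
  by simp_all

lemma nc_cong_add: "nc_cong G f g \<Longrightarrow> nc_cong G f' g' \<Longrightarrow> nc_cong G (f + f') (g + g')"
  unfolding nc_cong_def using nc_ideal_add by (fastforce simp: algebra_simps)

lemma nc_cong_diff: "nc_cong G f g \<Longrightarrow> nc_cong G f' g' \<Longrightarrow> nc_cong G (f - f') (g - g')"
  unfolding nc_cong_def using nc_ideal_diff by (fastforce simp: algebra_simps)

lemma nc_cong_scale: "nc_cong G f g \<Longrightarrow> nc_cong G (c *: f) (c *: g)"
  unfolding nc_cong_def using nc_ideal_scale by (fastforce simp: nc_scale_diff[symmetric])

lemma nc_cong_mult_left: "c \<in> ncpoly \<Longrightarrow> nc_cong G f g \<Longrightarrow> nc_cong G (c \<odot> f) (c \<odot> g)"
  unfolding nc_cong_def using nc_ideal_mult_left by (fastforce simp: nc_mult_diff_right[symmetric])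

lemma nc_cong_mult_right: "c \<in> ncpoly \<Longrightarrow> nc_cong G f g \<Longrightarrow> nc_cong G (f \<odot> c) (g \<odot> c)"
  unfolding nc_cong_def using nc_ideal_mult_right by (fastforce simp: nc_mult_diff_left[symmetric])

context vector_space
begin

lemma dim_le_dim_add_card:
  assumes "V \<subseteq> span (K \<union> S)" "finite S" "K \<subseteq> span W" "finite W"
  shows "dim V \<le> dim K + card S"
proof -
  obtain B where B: "B \<subseteq> K" "independent B" "K \<subseteq> span B" "card B = dim K"
    using basis_exists by blast
  have "finite B"
    using independent_span_bound[OF assms(4) B(2)] B(1) assms(3) by auto
  have "K \<union> S \<subseteq> span (B \<union> S)"
    using B(3) span_mono[of B "B \<union> S"] span_superset[of "B \<union> S"] by blast
  then have "V \<subseteq> span (B \<union> S)"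
    using assms(1) span_minimal[OF _ subspace_span] by blast
  then have "dim V \<le> card (B \<union> S)"
    using \<open>finite B\<close> assms(2) by (intro dim_le_card) auto
  also have "\<dots> \<le> dim K + card S"
    using card_Un_le[of B S] B(4) by simp
  finally show ?thesis .
qed

lemma unit_coeffs_sum:
  fixes b :: "'i \<Rightarrow> 'b"
  assumes "finite T" "j \<in> T"
  shows "(\<Sum>k\<in>T. (if k = j then 1 else 0 :: 'a) *s b k) = b j"
proof -
  have "(\<Sum>k\<in>T. (if k = j then 1 else 0 :: 'a) *s b k) = (\<Sum>k\<in>T. if k = j then b k else 0)"
    by (intro sum.cong) auto
  with assms show ?thesis by simp
qed

lemma independent_mod_inj_on:
  fixes b :: "'i \<Rightarrow> 'b"
  assumes "finite T"
    and indep_mod: "\<And>c. (\<Sum>i\<in>T. c i *s b i) \<in> span K \<Longrightarrow> \<forall>i\<in>T. c i = 0"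
  shows "inj_on b T"
proof (rule inj_onI)
  fix i j assume ij: "i \<in> T" "j \<in> T" "b i = b j"
  define c :: "'i \<Rightarrow> 'a" where "c k = (if k = i then 1 else 0) - (if k = j then 1 else 0)" for k
  have "(\<Sum>k\<in>T. c k *s b k) = b i - b j"
    using ij assms(1) unit_coeffs_sum[of T _ b] by (simp add: c_def scale_left_diff_distrib sum_subtractf)
  then have "(\<Sum>k\<in>T. c k *s b k) \<in> span K"
    using ij(3) span_zero by simp
  then have "\<forall>k\<in>T. c k = 0"
    by (rule indep_mod)
  with ij(1) show "i = j" by (auto simp: c_def split: if_splits)
qed

lemma independent_mod_not_in_span:
  fixes b :: "'i \<Rightarrow> 'b"
  assumes "finite T" "j \<in> T"
    and indep_mod: "\<And>c. (\<Sum>i\<in>T. c i *s b i) \<in> span K \<Longrightarrow> \<forall>i\<in>T. c i = 0"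
  shows "b j \<notin> span K"
proof
  assume "b j \<in> span K"
  then have "(\<Sum>k\<in>T. (if k = j then 1 else 0 :: 'a) *s b k) \<in> span K"
    using unit_coeffs_sum[OF assms(1,2)] by simp
  then have "\<forall>k\<in>T. (if k = j then 1 else 0) = (0 :: 'a)"
    by (rule indep_mod[of "\<lambda>k. if k = j then 1 else 0"])
  with assms(2) show False by auto
qed

lemma independent_mod_Un:
  fixes b :: "'i \<Rightarrow> 'b"
  assumes "finite T" "finite B" "independent B" "B \<subseteq> span K"
    and indep_mod: "\<And>c. (\<Sum>i\<in>T. c i *s b i) \<in> span K \<Longrightarrow> \<forall>i\<in>T. c i = 0"
  shows "independent (B \<union> b ` T)"
proof (rule independent_if_scalars_zero)
  show "finite (B \<union> b ` T)" using assms(1,2) by simp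
next
  fix f x assume sum0: "(\<Sum>x\<in>B \<union> b ` T. f x *s x) = 0" and x: "x \<in> B \<union> b ` T"
  have "b j \<notin> B" if "j \<in> T" for j
    using independent_mod_not_in_span[OF assms(1) that indep_mod] assms(4) by blast
  then have "B \<inter> b ` T = {}"
    by blast
  then have split: "(\<Sum>x\<in>B. f x *s x) + (\<Sum>i\<in>T. f (b i) *s b i) = 0"
    using sum0 assms(1,2) independent_mod_inj_on[OF assms(1) indep_mod]
    by (simp add: sum.union_disjoint sum.reindex)
  have "- (\<Sum>x\<in>B. f x *s x) \<in> span K"
    using assms(4) by (intro span_neg span_sum span_scale) auto
  moreover have "(\<Sum>i\<in>T. f (b i) *s b i) = - (\<Sum>x\<in>B. f x *s x)"
    using split by (simp add: eq_neg_iff_add_eq_0 add.commute)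
  ultimately have "(\<Sum>i\<in>T. f (b i) *s b i) \<in> span K"
    by simp
  then have zero_T: "\<forall>i\<in>T. f (b i) = 0"
    by (rule indep_mod[of "\<lambda>i. f (b i)"])
  then have "(\<Sum>x\<in>B. f x *s x) = 0"
    using split by simp
  then have "\<forall>x\<in>B. f x = 0"
    using assms(2,3) independentD by blast
  with zero_T x show "f x = 0" by blast
qed

lemma dim_add_card_le:
  fixes b :: "'i \<Rightarrow> 'b"
  assumes "finite T" "K \<subseteq> V" "b ` T \<subseteq> V" "V \<subseteq> span W" "finite W"
    and indep_mod: "\<And>c. (\<Sum>i\<in>T. c i *s b i) \<in> span K \<Longrightarrow> \<forall>i\<in>T. c i = 0"
  shows "dim K + card T \<le> dim V"
proof -
  obtain B where B: "B \<subseteq> K" "independent B" "K \<subseteq> span B" "card B = dim K"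
    using basis_exists by blast
  obtain C where C: "C \<subseteq> V" "independent C" "V \<subseteq> span C" "card C = dim V"
    using basis_exists by blast
  have "finite C"
    using independent_span_bound[OF assms(5) C(2)] C(1) assms(4) by auto
  have "finite B"
    using independent_span_bound[OF \<open>finite C\<close> B(2)] B(1) assms(2) C(3) by auto
  have "B \<subseteq> span K"
    using B(1) span_superset by blast
  have "independent (B \<union> b ` T)"
    by (rule independent_mod_Un[OF assms(1) \<open>finite B\<close> B(2) \<open>B \<subseteq> span K\<close> indep_mod])
  moreover have "B \<union> b ` T \<subseteq> span C"
    using B(1) assms(2,3) C(3) by blast
  ultimately have "card (B \<union> b ` T) \<le> dim V"
    using independent_span_bound[OF \<open>finite C\<close>] C(4) by auto
  moreover have "b j \<notin> B" if "j \<in> T" for j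
    using independent_mod_not_in_span[OF assms(1) that indep_mod] \<open>B \<subseteq> span K\<close> by blast
  then have "B \<inter> b ` T = {}"
    by blast
  then have "card (B \<union> b ` T) = dim K + card T"
    using \<open>finite B\<close> assms(1) card_image[OF independent_mod_inj_on[OF assms(1) indep_mod]] B(4)
    by (simp add: card_Un_disjoint)
  ultimately show ?thesis by simp
qed

end

fun nc_pow :: "ncp \<Rightarrow> nat \<Rightarrow> ncp" where
  "nc_pow f 0 = nc_mon []"
| "nc_pow f (Suc n) = f \<odot> nc_pow f n"

lemma nc_pow_Suc_right: "nc_pow f (Suc n) = nc_pow f n \<odot> f"
proof (induction n)
  case 0
  show ?case by (simp add: nc_mon_Nil_mult nc_mult_mon_Nil)
next
  case (Suc n)
  then have "nc_pow f (Suc (Suc n)) = f \<odot> (nc_pow f n \<odot> f)" by simp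
  then show ?case by (simp add: nc_mult_assoc)
qed

lemma ncpoly_nc_pow [simp]: "f \<in> ncpoly \<Longrightarrow> nc_pow f n \<in> ncpoly"
  by (induction n) auto

lemma ncpoly_deg_nc_pow: "f \<in> ncpoly_deg d \<Longrightarrow> nc_pow f n \<in> ncpoly_deg (d * n)"
  by (induction n) (simp_all add: ncpoly_deg_mon ncpoly_deg_mult)

definition skew_comm :: "ncp set \<Rightarrow> complex \<Rightarrow> ncp \<Rightarrow> ncp \<Rightarrow> bool" where
  "skew_comm G c A B \<longleftrightarrow> nc_cong G (A \<odot> B) (c *: (B \<odot> A))"

lemma skew_comm_mult_left:
  assumes "skew_comm G c A B" "skew_comm G d C B" "A \<in> ncpoly" "C \<in> ncpoly"
  shows "skew_comm G (c * d) (A \<odot> C) B"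
proof -
  have "A \<odot> C \<odot> B = A \<odot> (C \<odot> B)" by (simp add: nc_mult_assoc)
  also have "nc_cong G \<dots> (A \<odot> (d *: (B \<odot> C)))"
    using assms by (intro nc_cong_mult_left) (auto simp: skew_comm_def)
  also have "A \<odot> (d *: (B \<odot> C)) = d *: ((A \<odot> B) \<odot> C)"
    by (simp add: nc_mult_scale_right nc_mult_assoc)
  also have "nc_cong G \<dots> (d *: ((c *: (B \<odot> A)) \<odot> C))"
    using assms by (intro nc_cong_scale nc_cong_mult_right) (auto simp: skew_comm_def)
  also have "d *: ((c *: (B \<odot> A)) \<odot> C) = (c * d) *: (B \<odot> (A \<odot> C))"
    by (simp add: nc_mult_scale_left nc_scale_scale nc_mult_assoc mult.commute)
  finally show ?thesis unfolding skew_comm_def .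
qed

lemma skew_comm_mult_right:
  assumes "skew_comm G c A B" "skew_comm G d A C" "B \<in> ncpoly" "C \<in> ncpoly"
  shows "skew_comm G (c * d) A (B \<odot> C)"
proof -
  have "A \<odot> (B \<odot> C) = (A \<odot> B) \<odot> C" by (simp add: nc_mult_assoc)
  also have "nc_cong G \<dots> ((c *: (B \<odot> A)) \<odot> C)"
    using assms by (intro nc_cong_mult_right) (auto simp: skew_comm_def)
  also have "(c *: (B \<odot> A)) \<odot> C = c *: (B \<odot> (A \<odot> C))"
    by (simp add: nc_mult_scale_left nc_mult_assoc)
  also have "nc_cong G \<dots> (c *: (B \<odot> (d *: (C \<odot> A))))"
    using assms by (intro nc_cong_scale nc_cong_mult_left) (auto simp: skew_comm_def)
  also have "c *: (B \<odot> (d *: (C \<odot> A))) = (c * d) *: ((B \<odot> C) \<odot> A)"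
    by (simp add: nc_mult_scale_right nc_scale_scale nc_mult_assoc)
  finally show ?thesis unfolding skew_comm_def .
qed

lemma skew_comm_diff_scale_left:
  assumes "skew_comm G c A B" "skew_comm G c C B"
  shows "skew_comm G c (A - s *: C) B"
proof -
  have "(A - s *: C) \<odot> B = A \<odot> B - s *: (C \<odot> B)"
    by (simp add: nc_mult_diff_left nc_mult_scale_left)
  also have "nc_cong G \<dots> (c *: (B \<odot> A) - s *: (c *: (B \<odot> C)))"
    using assms unfolding skew_comm_def by (intro nc_cong_diff nc_cong_scale)
  also have "c *: (B \<odot> A) - s *: (c *: (B \<odot> C)) = c *: (B \<odot> (A - s *: C))"
    by (simp add: nc_mult_diff_right nc_mult_scale_right nc_scale_diff nc_scale_scale mult.commute)
  finally show ?thesis unfolding skew_comm_def .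
qed

lemma skew_comm_pow_left:
  assumes "skew_comm G c A B" "A \<in> ncpoly"
  shows "skew_comm G (c ^ n) (nc_pow A n) B"
proof (induction n)
  case 0
  show ?case by (simp add: skew_comm_def nc_mon_Nil_mult nc_mult_mon_Nil nc_scale_one)
next
  case (Suc n)
  with skew_comm_mult_left[OF assms(1) Suc] assms(2) show ?case by simp
qed

lemma skew_comm_pow_right:
  assumes "skew_comm G c A B" "B \<in> ncpoly"
  shows "skew_comm G (c ^ n) A (nc_pow B n)"
proof (induction n)
  case 0
  show ?case by (simp add: skew_comm_def nc_mon_Nil_mult nc_mult_mon_Nil nc_scale_one)
next
  case (Suc n)
  with skew_comm_mult_right[OF assms(1) Suc] assms(2) show ?case by simp
qed

section \<open>The relations of \<open>T\<^sub>t\<close>\<close>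

definition r1 :: "complex \<Rightarrow> ncp" where
  "r1 t = nc_mon [2,0,1] - nc_mon [1,2,0] - t *: nc_mon [0,2,1] + t *: nc_mon [1,0,2]"

definition r2 :: "complex \<Rightarrow> ncp" where
  "r2 t = t *: nc_mon [2,1,0] - t *: nc_mon [0,2,1] - nc_mon [1,2,0] + nc_mon [0,1,2]"

lemma nc_prod3_mon: "nc_prod3 (nc_mon [a]) (nc_mon [b]) (nc_mon [c]) = nc_mon [a,b,c]"
  by (simp add: nc_prod3_def nc_mon_mult)

lemma v1_eq_r1_r2:
  assumes "\<omega>^2 = - 1 - \<omega>"
  shows "v1 \<omega> t = r1 t + \<omega> *: r2 t"
  unfolding v1_def r1_def r2_def nc_prod3_mon
  by (auto simp: fun_eq_iff nc_scale_def nc_mon_def algebra_simps assms)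

lemma v2_eq_r1_r2:
  assumes "\<omega>^2 = - 1 - \<omega>"
  shows "v2 \<omega> t = r1 t + \<omega>^2 *: r2 t"
  unfolding v2_def r1_def r2_def nc_prod3_mon
  by (auto simp: fun_eq_iff nc_scale_def nc_mon_def algebra_simps assms)

lemma T_rels_subset_ncpoly: "T_rels \<omega> t \<subseteq> ncpoly"
  by (auto simp: T_rels_def v1_def v2_def nc_prod3_def)

locale T_algebra =
  fixes \<omega> t :: complex
  assumes omega_cube: "\<omega>^3 = 1" and omega_ne_1: "\<omega> \<noteq> 1" and t_nonzero: "t \<noteq> 0"
begin

abbreviation I :: "ncp set" where
  "I \<equiv> nc_ideal (T_rels \<omega> t)"

abbreviation cong_T :: "ncp \<Rightarrow> ncp \<Rightarrow> bool" (infix "\<doteq>" 50) where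
  "f \<doteq> g \<equiv> nc_cong (T_rels \<omega> t) f g"

abbreviation skew :: "complex \<Rightarrow> ncp \<Rightarrow> ncp \<Rightarrow> bool" where
  "skew \<equiv> skew_comm (T_rels \<omega> t)"

lemma omega_sq: "\<omega>^2 = - 1 - \<omega>"
proof -
  have "(\<omega> - 1) * (\<omega>^2 + \<omega> + 1) = \<omega>^3 - 1"
    by (simp add: algebra_simps power2_eq_square power3_eq_cube)
  with omega_cube omega_ne_1 have "\<omega>^2 + \<omega> + 1 = 0" by simp
  then show ?thesis by (simp add: algebra_simps eq_neg_iff_add_eq_0)
qed

lemma omega_ne_omega_sq: "\<omega> - \<omega>^2 \<noteq> 0"
proof
  assume "\<omega> - \<omega>^2 = 0"
  then have "\<omega> * (1 - \<omega>) = 0" by (simp add: algebra_simps power2_eq_square)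
  moreover have "\<omega> \<noteq> 0" using omega_cube by auto
  ultimately show False using omega_ne_1 by simp
qed

text \<open>Since \<open>\<omega> \<noteq> \<omega>\<^sup>2\<close>, the relations \<open>v\<^sub>1, v\<^sub>2\<close> can be traded for the \<open>\<omega>\<close>-free \<open>r\<^sub>1, r\<^sub>2\<close>.\<close>

lemma r2_in_I: "r2 t \<in> I"
proof -
  have "v1 \<omega> t - v2 \<omega> t = (\<omega> - \<omega>^2) *: r2 t"
    using v1_eq_r1_r2[OF omega_sq] v2_eq_r1_r2[OF omega_sq]
    by (simp add: nc_scale_def fun_eq_iff algebra_simps)
  then have "r2 t = (1 / (\<omega> - \<omega>^2)) *: (v1 \<omega> t - v2 \<omega> t)"
    using omega_ne_omega_sq by (simp add: nc_scale_scale nc_scale_one)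
  moreover have "v1 \<omega> t \<in> I" "v2 \<omega> t \<in> I"
    by (auto simp: T_rels_def intro: generator_in_nc_ideal)
  ultimately show ?thesis by (simp add: nc_ideal_scale nc_ideal_diff)
qed

lemma r1_in_I: "r1 t \<in> I"
proof -
  have "r1 t = v1 \<omega> t - \<omega> *: r2 t" using v1_eq_r1_r2[OF omega_sq] by simp
  moreover have "v1 \<omega> t \<in> I" by (auto simp: T_rels_def intro: generator_in_nc_ideal)
  ultimately show ?thesis using r2_in_I by (simp add: nc_ideal_scale nc_ideal_diff)
qed

lemma square_in_I:
  assumes "c \<in> {0,1,2}" "set u \<subseteq> {0,1,2}" "set v \<subseteq> {0,1,2}" "w = u @ [c,c] @ v"
  shows "nc_mon w \<in> I"
proof -
  have "nc_mon [c,c] \<in> T_rels \<omega> t" using assms(1) by (auto simp: T_rels_def nc_mon_mult)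
  then have "nc_mon u \<odot> nc_mon [c,c] \<odot> nc_mon v \<in> I"
    using assms(2,3) by (intro nc_ideal_generator) auto
  with assms(4) show ?thesis by (simp add: nc_mon_mult)
qed

definition \<alpha> :: ncp where "\<alpha> = X \<odot> Y - t *: (Y \<odot> X)"
definition \<beta> :: ncp where "\<beta> = Y \<odot> Z - t *: (Z \<odot> Y)"
definition \<gamma> :: ncp where "\<gamma> = Z \<odot> X - t *: (X \<odot> Z)"

lemma alpha_eq: "\<alpha> = nc_mon [0,1] - t *: nc_mon [1,0]"
  and beta_eq: "\<beta> = nc_mon [1,2] - t *: nc_mon [2,1]"
  and gamma_eq: "\<gamma> = nc_mon [2,0] - t *: nc_mon [0,2]"
  by (simp_all add: \<alpha>_def \<beta>_def \<gamma>_def nc_mon_mult)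

lemma ncpoly_alpha [simp]: "\<alpha> \<in> ncpoly"
  and ncpoly_beta [simp]: "\<beta> \<in> ncpoly"
  and ncpoly_gamma [simp]: "\<gamma> \<in> ncpoly"
  by (simp_all add: \<alpha>_def \<beta>_def \<gamma>_def)

lemma ncpoly_deg_alpha: "\<alpha> \<in> ncpoly_deg 2"
  and ncpoly_deg_beta: "\<beta> \<in> ncpoly_deg 2"
  and ncpoly_deg_gamma: "\<gamma> \<in> ncpoly_deg 2"
  unfolding alpha_eq beta_eq gamma_eq
  by (auto intro!: ncpoly_deg_diff ncpoly_deg_scale ncpoly_deg_mon)

lemmas expand_mon = alpha_eq beta_eq gamma_eq nc_mult_diff_left nc_mult_diff_right
  nc_mult_scale_left nc_mult_scale_right nc_mon_mult nc_mult_add_left nc_mult_add_right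
  nc_scale_diff nc_scale_scale nc_scale_add

lemma skewI: "A \<odot> B - c *: (B \<odot> A) \<in> I \<Longrightarrow> skew c A B"
  by (simp add: skew_comm_def nc_cong_def)

lemma skew_X_alpha: "skew (-t) X \<alpha>"
proof (rule skewI)
  have "X \<odot> \<alpha> - (-t) *: (\<alpha> \<odot> X) = nc_mon [0,0,1] - (t*t) *: nc_mon [1,0,0]"
    by (simp add: expand_mon, (auto simp: fun_eq_iff nc_scale_def nc_mon_def algebra_simps)?)
  also have "\<dots> \<in> I"
    by (intro nc_ideal_diff nc_ideal_scale square_in_I[of 0 "[]" "[1]"] square_in_I[of 0 "[1]" "[]"]) auto
  finally show "X \<odot> \<alpha> - (-t) *: (\<alpha> \<odot> X) \<in> I" .
qed

lemma skew_X_beta: "skew 1 X \<beta>"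
proof (rule skewI)
  have "X \<odot> \<beta> - 1 *: (\<beta> \<odot> X) = r2 t"
    by (simp add: expand_mon r2_def, (auto simp: fun_eq_iff nc_scale_def nc_mon_def algebra_simps)?)
  with r2_in_I show "X \<odot> \<beta> - 1 *: (\<beta> \<odot> X) \<in> I" by simp
qed

lemma skew_X_gamma: "skew (-1/t) X \<gamma>"
proof (rule skewI)
  have "X \<odot> \<gamma> - (-1/t) *: (\<gamma> \<odot> X) = (1/t) *: nc_mon [2,0,0] - t *: nc_mon [0,0,2]"
    by (simp add: expand_mon, (auto simp: fun_eq_iff nc_scale_def nc_mon_def algebra_simps t_nonzero)?)
  also have "\<dots> \<in> I"
    by (intro nc_ideal_diff nc_ideal_scale square_in_I[of 0 "[2]" "[]"] square_in_I[of 0 "[]" "[2]"]) auto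
  finally show "X \<odot> \<gamma> - (-1/t) *: (\<gamma> \<odot> X) \<in> I" .
qed

lemma skew_Y_alpha: "skew (-1/t) Y \<alpha>"
proof (rule skewI)
  have "Y \<odot> \<alpha> - (-1/t) *: (\<alpha> \<odot> Y) = (1/t) *: nc_mon [0,1,1] - t *: nc_mon [1,1,0]"
    by (simp add: expand_mon, (auto simp: fun_eq_iff nc_scale_def nc_mon_def algebra_simps t_nonzero)?)
  also have "\<dots> \<in> I"
    by (intro nc_ideal_diff nc_ideal_scale square_in_I[of 1 "[0]" "[]"] square_in_I[of 1 "[]" "[0]"]) auto
  finally show "Y \<odot> \<alpha> - (-1/t) *: (\<alpha> \<odot> Y) \<in> I" .
qed

lemma skew_Y_beta: "skew (-t) Y \<beta>"
proof (rule skewI)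
  have "Y \<odot> \<beta> - (-t) *: (\<beta> \<odot> Y) = nc_mon [1,1,2] - (t*t) *: nc_mon [2,1,1]"
    by (simp add: expand_mon, (auto simp: fun_eq_iff nc_scale_def nc_mon_def algebra_simps)?)
  also have "\<dots> \<in> I"
    by (intro nc_ideal_diff nc_ideal_scale square_in_I[of 1 "[]" "[2]"] square_in_I[of 1 "[2]" "[]"]) auto
  finally show "Y \<odot> \<beta> - (-t) *: (\<beta> \<odot> Y) \<in> I" .
qed

lemma skew_Y_gamma: "skew 1 Y \<gamma>"
proof (rule skewI)
  have "Y \<odot> \<gamma> - 1 *: (\<gamma> \<odot> Y) = - r1 t"
    by (simp add: expand_mon r1_def, (auto simp: fun_eq_iff nc_scale_def nc_mon_def algebra_simps)?)
  with r1_in_I show "Y \<odot> \<gamma> - 1 *: (\<gamma> \<odot> Y) \<in> I" by (simp add: nc_ideal_uminus)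
qed

lemma skew_Z_alpha: "skew 1 Z \<alpha>"
proof (rule skewI)
  have "Z \<odot> \<alpha> - 1 *: (\<alpha> \<odot> Z) = r1 t - r2 t"
    by (simp add: expand_mon r1_def r2_def, (auto simp: fun_eq_iff nc_scale_def nc_mon_def algebra_simps)?)
  with r1_in_I r2_in_I show "Z \<odot> \<alpha> - 1 *: (\<alpha> \<odot> Z) \<in> I" by (simp add: nc_ideal_diff)
qed

lemma skew_Z_beta: "skew (-1/t) Z \<beta>"
proof (rule skewI)
  have "Z \<odot> \<beta> - (-1/t) *: (\<beta> \<odot> Z) = (1/t) *: nc_mon [1,2,2] - t *: nc_mon [2,2,1]"
    by (simp add: expand_mon, (auto simp: fun_eq_iff nc_scale_def nc_mon_def algebra_simps t_nonzero)?)
  also have "\<dots> \<in> I"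
    by (intro nc_ideal_diff nc_ideal_scale square_in_I[of 2 "[1]" "[]"] square_in_I[of 2 "[]" "[1]"]) auto
  finally show "Z \<odot> \<beta> - (-1/t) *: (\<beta> \<odot> Z) \<in> I" .
qed

lemma skew_Z_gamma: "skew (-t) Z \<gamma>"
proof (rule skewI)
  have "Z \<odot> \<gamma> - (-t) *: (\<gamma> \<odot> Z) = nc_mon [2,2,0] - (t*t) *: nc_mon [0,2,2]"
    by (simp add: expand_mon, (auto simp: fun_eq_iff nc_scale_def nc_mon_def algebra_simps)?)
  also have "\<dots> \<in> I"
    by (intro nc_ideal_diff nc_ideal_scale square_in_I[of 2 "[]" "[0]"] square_in_I[of 2 "[0]" "[]"]) auto
  finally show "Z \<odot> \<gamma> - (-t) *: (\<gamma> \<odot> Z) \<in> I" .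
qed

lemma skew_beta_alpha: "skew (-1/t) \<beta> \<alpha>"
  unfolding \<beta>_def
  using skew_comm_mult_left[OF skew_Y_alpha skew_Z_alpha] skew_comm_mult_left[OF skew_Z_alpha skew_Y_alpha]
  by (intro skew_comm_diff_scale_left) simp_all

lemma skew_gamma_alpha: "skew (-t) \<gamma> \<alpha>"
  unfolding \<gamma>_def
  using skew_comm_mult_left[OF skew_Z_alpha skew_X_alpha] skew_comm_mult_left[OF skew_X_alpha skew_Z_alpha]
  by (intro skew_comm_diff_scale_left) simp_all

lemma skew_gamma_beta: "skew (-1/t) \<gamma> \<beta>"
  unfolding \<gamma>_def
  using skew_comm_mult_left[OF skew_Z_beta skew_X_beta] skew_comm_mult_left[OF skew_X_beta skew_Z_beta]
  by (intro skew_comm_diff_scale_left) simp_all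

end

section \<open>A spanning set\<close>

definition xyz_word :: "bool \<Rightarrow> bool \<Rightarrow> bool \<Rightarrow> nat list" where
  "xyz_word e1 e2 e3 = (if e1 then [0] else []) @ (if e2 then [1] else []) @ (if e3 then [2] else [])"

abbreviation xyz :: "bool \<Rightarrow> bool \<Rightarrow> bool \<Rightarrow> ncp" where
  "xyz e1 e2 e3 \<equiv> nc_mon (xyz_word e1 e2 e3)"

definition xyz_deg :: "bool \<Rightarrow> bool \<Rightarrow> bool \<Rightarrow> nat" where
  "xyz_deg e1 e2 e3 = of_bool e1 + of_bool e2 + of_bool e3"

lemma xyz_word_simps [simp]:
  "xyz_word False False False = []" "xyz_word False False True = [2]"
  "xyz_word False True False = [1]" "xyz_word False True True = [1,2]"
  "xyz_word True False False = [0]" "xyz_word True False True = [0,2]"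
  "xyz_word True True False = [0,1]" "xyz_word True True True = [0,1,2]"
  by (simp_all add: xyz_word_def)

lemma set_xyz_word: "set (xyz_word e1 e2 e3) \<subseteq> {0,1,2}"
  by (auto simp: xyz_word_def)

lemma ncpoly_xyz [simp]: "xyz e1 e2 e3 \<in> ncpoly"
  using set_xyz_word by simp

lemma ncpoly_deg_xyz: "xyz e1 e2 e3 \<in> ncpoly_deg (xyz_deg e1 e2 e3)"
  by (intro ncpoly_deg_mon set_xyz_word) (simp add: xyz_word_def xyz_deg_def)

lemma double_div_2_plus_odd: "2 * (a div 2) + of_bool (odd a) = (a :: nat)"
  by (cases "odd a") (simp_all add: odd_two_times_div_two_succ)

lemma xyz_deg_odd:
  "2 * (a div 2 + b div 2 + c div 2) + xyz_deg (odd a) (odd b) (odd c) = a + b + c"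
  using double_div_2_plus_odd[of a] double_div_2_plus_odd[of b] double_div_2_plus_odd[of c]
  by (simp add: xyz_deg_def)

definition monomial_exponents :: "nat \<Rightarrow> (nat \<times> nat \<times> nat) set" where
  "monomial_exponents k = {(a, b, c). a + b + c = k}"

lemma finite_monomial_exponents: "finite (monomial_exponents k)"
  unfolding monomial_exponents_def
  by (rule finite_subset[of _ "{..k} \<times> {..k} \<times> {..k}"]) auto

lemma card_pairs_sum_eq: "card {(a, b). a + b = (n::nat)} = Suc n"
proof -
  have "{(a, b). a + b = n} = (\<lambda>a. (a, n - a)) ` {..n}" by auto
  moreover have "inj_on (\<lambda>a. (a, n - a)) {..n}" by (auto simp: inj_on_def)
  ultimately show ?thesis by (simp add: card_image)
qed

lemma card_pairs_sum_le: "2 * card {(a, b). a + b \<le> (k::nat)} = (k + 1) * (k + 2)"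
proof (induction k)
  case 0
  have "{(a, b). a + b \<le> (0::nat)} = {(0, 0)}" by auto
  then show ?case by simp
next
  case (Suc k)
  have "{(a, b). a + b \<le> Suc k} = {(a, b). a + b \<le> k} \<union> {(a, b). a + b = Suc k}" by auto
  moreover have "finite {(a, b). a + b \<le> (k::nat)}"
    by (rule finite_subset[of _ "{..k} \<times> {..k}"]) auto
  moreover have "finite {(a, b). a + b = Suc (k::nat)}"
    by (rule finite_subset[of _ "{..Suc k} \<times> {..Suc k}"]) auto
  ultimately have "card {(a, b). a + b \<le> Suc k} = card {(a, b). a + b \<le> k} + card {(a, b). a + b = Suc k}"
    by (simp add: card_Un_disjoint disjoint_iff)
  with Suc card_pairs_sum_eq[of "Suc k"] show ?case by simp
qed

lemma card_monomial_exponents: "card (monomial_exponents k) = (k + 1) * (k + 2) div 2"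
proof -
  have "monomial_exponents k = (\<lambda>(a, b). (a, b, k - a - b)) ` {(a, b). a + b \<le> k}"
    unfolding monomial_exponents_def by (auto simp: image_iff)
  moreover have "inj_on (\<lambda>(a, b). (a, b, k - a - b)) {(a, b). a + b \<le> k}"
    by (auto simp: inj_on_def)
  ultimately have "card (monomial_exponents k) = card {(a, b). a + b \<le> k}"
    by (simp add: card_image)
  with card_pairs_sum_le[of k] show ?thesis by simp
qed

context T_algebra
begin

definition abg :: "nat \<Rightarrow> nat \<Rightarrow> nat \<Rightarrow> ncp" where
  "abg i j l = nc_pow \<alpha> i \<odot> (nc_pow \<beta> j \<odot> nc_pow \<gamma> l)"

lemma ncpoly_abg [simp]: "abg i j l \<in> ncpoly"
  by (simp add: abg_def)

lemma ncpoly_deg_abg: "abg i j l \<in> ncpoly_deg (2 * (i + j + l))"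
proof -
  have "abg i j l \<in> ncpoly_deg (2 * i + (2 * j + 2 * l))"
    unfolding abg_def
    using ncpoly_deg_nc_pow[OF ncpoly_deg_alpha, of i] ncpoly_deg_nc_pow[OF ncpoly_deg_beta, of j]
      ncpoly_deg_nc_pow[OF ncpoly_deg_gamma, of l]
    by (intro ncpoly_deg_mult) auto
  then show ?thesis by (simp add: algebra_simps)
qed

lemma skew_abg:
  assumes "skew a L \<alpha>" "skew b L \<beta>" "skew c L \<gamma>"
  shows "skew (a^i * (b^j * c^l)) L (abg i j l)"
  unfolding abg_def
  using assms by (intro skew_comm_mult_right skew_comm_pow_right) auto

lemma letter_skew_abg:
  assumes "c \<in> {0,1,2}"
  obtains s where "skew s (nc_mon [c]) (abg i j l)"
  using assms skew_abg[OF skew_X_alpha skew_X_beta skew_X_gamma]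
    skew_abg[OF skew_Y_alpha skew_Y_beta skew_Y_gamma] skew_abg[OF skew_Z_alpha skew_Z_beta skew_Z_gamma]
  by fastforce

lemma abg_mult_alpha: "\<exists>c. abg i j l \<odot> \<alpha> \<doteq> c *: abg (Suc i) j l"
proof -
  obtain c where c: "skew c (nc_pow \<beta> j \<odot> nc_pow \<gamma> l) \<alpha>"
    using skew_comm_mult_left[OF skew_comm_pow_left[OF skew_beta_alpha] skew_comm_pow_left[OF skew_gamma_alpha]]
    by auto
  have "abg i j l \<odot> \<alpha> = nc_pow \<alpha> i \<odot> ((nc_pow \<beta> j \<odot> nc_pow \<gamma> l) \<odot> \<alpha>)"
    by (simp add: abg_def nc_mult_assoc)
  also have "\<dots> \<doteq> nc_pow \<alpha> i \<odot> (c *: (\<alpha> \<odot> (nc_pow \<beta> j \<odot> nc_pow \<gamma> l)))"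
    using c by (intro nc_cong_mult_left) (auto simp: skew_comm_def)
  also have "nc_pow \<alpha> i \<odot> (c *: (\<alpha> \<odot> (nc_pow \<beta> j \<odot> nc_pow \<gamma> l))) = c *: abg (Suc i) j l"
    by (simp del: nc_pow.simps(2) add: abg_def nc_mult_scale_right nc_pow_Suc_right nc_mult_assoc)
  finally show ?thesis by blast
qed

lemma abg_mult_beta: "\<exists>c. abg i j l \<odot> \<beta> \<doteq> c *: abg i (Suc j) l"
proof -
  have c: "skew ((-1/t)^l) (nc_pow \<gamma> l) \<beta>"
    by (rule skew_comm_pow_left[OF skew_gamma_beta]) simp
  have "abg i j l \<odot> \<beta> = nc_pow \<alpha> i \<odot> (nc_pow \<beta> j \<odot> (nc_pow \<gamma> l \<odot> \<beta>))"
    by (simp add: abg_def nc_mult_assoc)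
  also have "\<dots> \<doteq> nc_pow \<alpha> i \<odot> (nc_pow \<beta> j \<odot> ((-1/t)^l *: (\<beta> \<odot> nc_pow \<gamma> l)))"
    using c by (intro nc_cong_mult_left) (auto simp: skew_comm_def)
  also have "\<dots> = (-1/t)^l *: abg i (Suc j) l"
    by (simp del: nc_pow.simps(2) add: abg_def nc_mult_scale_right nc_pow_Suc_right nc_mult_assoc)
  finally show ?thesis by blast
qed

lemma abg_mult_gamma: "abg i j l \<odot> \<gamma> = abg i j (Suc l)"
  by (simp del: nc_pow.simps(2) add: abg_def nc_pow_Suc_right nc_mult_assoc)

text \<open>The tails are the words \<open>x\<^sup>e\<^sup>1 y\<^sup>e\<^sup>2 z\<^sup>e\<^sup>3\<close>; a letter times a tail is rewritten in terms of
  tails and \<open>\<alpha>, \<beta>, \<gamma>\<close>.\<close>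

lemma X_mult_tail: "X \<odot> xyz False e2 e3 = xyz True e2 e3"
  by (cases e2; cases e3) (simp_all add: nc_mon_mult)

lemma X_mult_x_tail: "X \<odot> xyz True e2 e3 \<doteq> 0"
proof -
  have "X \<odot> xyz True e2 e3 = nc_mon ([0,0] @ xyz_word False e2 e3)"
    by (cases e2; cases e3) (simp_all add: nc_mon_mult)
  also have "\<dots> \<in> I" by (rule square_in_I[of 0 "[]"]) (auto simp: xyz_word_def)
  finally show ?thesis by (simp add: nc_cong_def)
qed

lemma Y_mult_tail: "Y \<odot> xyz False False e3 = xyz False True e3"
  by (cases e3) (simp_all add: nc_mon_mult)

lemma Y_mult_y_tail: "Y \<odot> xyz False True e3 \<doteq> 0"
proof -
  have "Y \<odot> xyz False True e3 = nc_mon ([1,1] @ xyz_word False False e3)"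
    by (cases e3) (simp_all add: nc_mon_mult)
  also have "\<dots> \<in> I" by (rule square_in_I[of 1 "[]"]) (auto simp: xyz_word_def)
  finally show ?thesis by (simp add: nc_cong_def)
qed

lemma Y_mult_x_tail:
  "Y \<odot> xyz True False e3 = (1/t) *: xyz True True e3 - (1/t) *: (\<alpha> \<odot> xyz False False e3)"
  by (cases e3; simp add: expand_mon t_nonzero,
      (auto simp: fun_eq_iff nc_scale_def nc_mon_def field_simps t_nonzero)?)

lemma Y_mult_xy_tail: "Y \<odot> xyz True True e3 \<doteq> - (1/t) *: (\<alpha> \<odot> xyz False True e3)"
proof -
  have "Y \<odot> xyz True True e3 - (- (1/t) *: (\<alpha> \<odot> xyz False True e3))
      = (1/t) *: nc_mon ([0,1,1] @ xyz_word False False e3)"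
    by (cases e3; simp add: expand_mon t_nonzero,
        (auto simp: fun_eq_iff nc_scale_def nc_mon_def field_simps t_nonzero)?)
  also have "\<dots> \<in> I"
    by (intro nc_ideal_scale square_in_I[of 1 "[0]"]) (auto simp: xyz_word_def)
  finally show ?thesis by (simp add: nc_cong_def)
qed

lemma Z_mult_1: "Z \<odot> xyz False False False = xyz False False True"
  by (simp add: nc_mon_mult)

lemma Z_mult_z: "Z \<odot> xyz False False True \<doteq> 0"
proof -
  have "Z \<odot> xyz False False True = nc_mon [2,2]" by (simp add: nc_mon_mult)
  also have "\<dots> \<in> I" by (rule square_in_I[of 2 "[]" "[]"]) simp_all
  finally show ?thesis by (simp add: nc_cong_def)
qed

lemma Z_mult_y: "Z \<odot> xyz False True False = (1/t) *: xyz False True True - (1/t) *: (\<beta> \<odot> xyz False False False)"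
  by (simp add: expand_mon t_nonzero, (auto simp: fun_eq_iff nc_scale_def nc_mon_def field_simps t_nonzero)?)

lemma Z_mult_yz: "Z \<odot> xyz False True True \<doteq> - (1/t) *: (\<beta> \<odot> xyz False False True)"
proof -
  have "Z \<odot> xyz False True True - (- (1/t) *: (\<beta> \<odot> xyz False False True)) = (1/t) *: nc_mon [1,2,2]"
    by (simp add: expand_mon t_nonzero, (auto simp: fun_eq_iff nc_scale_def nc_mon_def field_simps t_nonzero)?)
  also have "\<dots> \<in> I" by (intro nc_ideal_scale square_in_I[of 2 "[1]" "[]"]) simp_all
  finally show ?thesis by (simp add: nc_cong_def)
qed

lemma Z_mult_x: "Z \<odot> xyz True False False = t *: xyz True False True + \<gamma> \<odot> xyz False False False"
  by (simp add: expand_mon t_nonzero, (auto simp: fun_eq_iff nc_scale_def nc_mon_def field_simps t_nonzero)?)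

lemma Z_mult_xz: "Z \<odot> xyz True False True \<doteq> \<gamma> \<odot> xyz False False True"
proof -
  have "Z \<odot> xyz True False True - \<gamma> \<odot> xyz False False True = t *: nc_mon [0,2,2]"
    by (simp add: expand_mon t_nonzero, (auto simp: fun_eq_iff nc_scale_def nc_mon_def field_simps t_nonzero)?)
  also have "\<dots> \<in> I" by (intro nc_ideal_scale square_in_I[of 2 "[0]" "[]"]) simp_all
  finally show ?thesis by (simp add: nc_cong_def)
qed

lemma Z_mult_xy:
  "Z \<odot> xyz True True False \<doteq> xyz True True True - \<beta> \<odot> xyz True False False + \<gamma> \<odot> xyz False True False"
proof -
  have "Z \<odot> xyz True True False - (xyz True True True - \<beta> \<odot> xyz True False False + \<gamma> \<odot> xyz False True False)
      = - r2 t"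
    by (simp add: expand_mon r2_def t_nonzero, (auto simp: fun_eq_iff nc_scale_def nc_mon_def field_simps t_nonzero)?)
  also have "\<dots> \<in> I" by (intro nc_ideal_uminus r2_in_I)
  finally show ?thesis by (simp add: nc_cong_def)
qed

lemma Z_mult_xyz: "Z \<odot> xyz True True True \<doteq> - (\<beta> \<odot> xyz True False True) + \<gamma> \<odot> xyz False True True"
proof -
  have "Z \<odot> xyz True True True - (- (\<beta> \<odot> xyz True False True) + \<gamma> \<odot> xyz False True True)
      = nc_mon [0,1,2,2] - r2 t \<odot> Z"
    by (simp add: expand_mon r2_def t_nonzero, (auto simp: fun_eq_iff nc_scale_def nc_mon_def field_simps t_nonzero)?)
  also have "\<dots> \<in> I"
    by (intro nc_ideal_diff square_in_I[of 2 "[0,1]" "[]"] nc_ideal_mult_right r2_in_I) simp_all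
  finally show ?thesis by (simp add: nc_cong_def)
qed

end

context T_algebra
begin

text \<open>The expected basis \<open>\<alpha>\<^sup>i \<beta>\<^sup>j \<gamma>\<^sup>l x\<^sup>e\<^sup>1 y\<^sup>e\<^sup>2 z\<^sup>e\<^sup>3\<close> of degree \<open>k\<close>, indexed by
  \<open>(2i + e\<^sub>1, 2j + e\<^sub>2, 2l + e\<^sub>3)\<close>.\<close>

definition normal_mon :: "nat \<times> nat \<times> nat \<Rightarrow> ncp" where
  "normal_mon = (\<lambda>(a, b, c). abg (a div 2) (b div 2) (c div 2) \<odot> xyz (odd a) (odd b) (odd c))"

definition reducible :: "nat \<Rightarrow> ncp \<Rightarrow> bool" where
  "reducible k f \<longleftrightarrow> (\<exists>g\<in>ncv.span (normal_mon ` monomial_exponents k). f \<doteq> g)"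

lemma ncpoly_deg_normal_mon: "y \<in> monomial_exponents k \<Longrightarrow> normal_mon y \<in> ncpoly_deg k"
proof (cases y)
  case (fields a b c)
  assume "y \<in> monomial_exponents k"
  then have "k = 2 * (a div 2 + b div 2 + c div 2) + xyz_deg (odd a) (odd b) (odd c)"
    using fields xyz_deg_odd[of a b c] by (simp add: monomial_exponents_def)
  then show ?thesis
    using ncpoly_deg_mult[OF ncpoly_deg_abg ncpoly_deg_xyz] fields by (simp add: normal_mon_def)
qed

lemma reducible_cong: "f \<doteq> f' \<Longrightarrow> reducible k f' \<Longrightarrow> reducible k f"
  unfolding reducible_def by (meson nc_cong_trans)

lemma reducible_zero: "reducible k 0"
  unfolding reducible_def using ncv.span_zero nc_cong_refl by blast

lemma reducible_add: "reducible k f \<Longrightarrow> reducible k f' \<Longrightarrow> reducible k (f + f')"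
  unfolding reducible_def by (meson nc_cong_add ncv.span_add)

lemma reducible_diff: "reducible k f \<Longrightarrow> reducible k f' \<Longrightarrow> reducible k (f - f')"
  unfolding reducible_def by (meson nc_cong_diff ncv.span_diff)

lemma reducible_scale: "reducible k f \<Longrightarrow> reducible k (c *: f)"
  unfolding reducible_def by (meson nc_cong_scale ncv.span_scale)

lemma reducible_uminus: "reducible k f \<Longrightarrow> reducible k (- f)"
  using reducible_diff[OF reducible_zero, of k f] by simp

lemma reducible_abg_xyz:
  assumes "2 * (i + j + l) + xyz_deg e1 e2 e3 = k"
  shows "reducible k (abg i j l \<odot> xyz e1 e2 e3)"
proof -
  let ?y = "(2 * i + of_bool e1, 2 * j + of_bool e2, 2 * l + of_bool e3)"
  have "?y \<in> monomial_exponents k"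
    using assms by (simp add: monomial_exponents_def xyz_deg_def)
  moreover have "abg i j l \<odot> xyz e1 e2 e3 = normal_mon ?y"
    by (simp add: normal_mon_def)
  ultimately show ?thesis
    unfolding reducible_def by (intro bexI[of _ "abg i j l \<odot> xyz e1 e2 e3"] nc_cong_refl ncv.span_base) simp
qed

lemma reducible_abg_alpha:
  assumes "2 * (Suc i + j + l) + xyz_deg e1 e2 e3 = k"
  shows "reducible k (abg i j l \<odot> (\<alpha> \<odot> xyz e1 e2 e3))"
proof -
  obtain c where c: "abg i j l \<odot> \<alpha> \<doteq> c *: abg (Suc i) j l" using abg_mult_alpha by blast
  have "abg i j l \<odot> (\<alpha> \<odot> xyz e1 e2 e3) = (abg i j l \<odot> \<alpha>) \<odot> xyz e1 e2 e3" by (simp add: nc_mult_assoc)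
  also have "\<dots> \<doteq> c *: (abg (Suc i) j l \<odot> xyz e1 e2 e3)"
    using nc_cong_mult_right[OF _ c] by (simp add: nc_mult_scale_left)
  finally show ?thesis using reducible_scale[OF reducible_abg_xyz[OF assms]] reducible_cong by blast
qed

lemma reducible_abg_beta:
  assumes "2 * (i + Suc j + l) + xyz_deg e1 e2 e3 = k"
  shows "reducible k (abg i j l \<odot> (\<beta> \<odot> xyz e1 e2 e3))"
proof -
  obtain c where c: "abg i j l \<odot> \<beta> \<doteq> c *: abg i (Suc j) l" using abg_mult_beta by blast
  have "abg i j l \<odot> (\<beta> \<odot> xyz e1 e2 e3) = (abg i j l \<odot> \<beta>) \<odot> xyz e1 e2 e3" by (simp add: nc_mult_assoc)
  also have "\<dots> \<doteq> c *: (abg i (Suc j) l \<odot> xyz e1 e2 e3)"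
    using nc_cong_mult_right[OF _ c] by (simp add: nc_mult_scale_left)
  finally show ?thesis using reducible_scale[OF reducible_abg_xyz[OF assms]] reducible_cong by blast
qed

lemma reducible_abg_gamma:
  assumes "2 * (i + j + Suc l) + xyz_deg e1 e2 e3 = k"
  shows "reducible k (abg i j l \<odot> (\<gamma> \<odot> xyz e1 e2 e3))"
  using reducible_abg_xyz[OF assms] by (simp add: abg_mult_gamma nc_mult_assoc[symmetric])

lemma reducible_letter_step:
  assumes "skew s L (abg i j l)" "L \<in> ncpoly" "L \<odot> xyz e1 e2 e3 \<doteq> h" "reducible k (abg i j l \<odot> h)"
  shows "reducible k (L \<odot> (abg i j l \<odot> xyz e1 e2 e3))"
proof -
  have "L \<odot> (abg i j l \<odot> xyz e1 e2 e3) = (L \<odot> abg i j l) \<odot> xyz e1 e2 e3" by (simp add: nc_mult_assoc)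
  also have "\<dots> \<doteq> (s *: (abg i j l \<odot> L)) \<odot> xyz e1 e2 e3"
    using assms(1) by (intro nc_cong_mult_right) (auto simp: skew_comm_def)
  also have "(s *: (abg i j l \<odot> L)) \<odot> xyz e1 e2 e3 = s *: (abg i j l \<odot> (L \<odot> xyz e1 e2 e3))"
    by (simp add: nc_mult_scale_left nc_mult_assoc)
  also have "\<dots> \<doteq> s *: (abg i j l \<odot> h)"
    using assms(3) by (intro nc_cong_scale nc_cong_mult_left) auto
  finally show ?thesis using reducible_scale[OF assms(4)] reducible_cong by blast
qed

lemmas nc_mult_distrib_right =
  nc_mult_add_right nc_mult_diff_right nc_mult_scale_right nc_mult_uminus_right nc_mult_zero_right

lemma reducible_X_mult:
  assumes deg: "2 * (i + j + l) + xyz_deg e1 e2 e3 = k"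
  shows "reducible (Suc k) (X \<odot> (abg i j l \<odot> xyz e1 e2 e3))"
proof -
  obtain s where s: "skew s X (abg i j l)" using letter_skew_abg[of 0 i j l] by auto
  show ?thesis
    using deg
    apply (induct e1)
    subgoal by (rule reducible_letter_step[OF s _ X_mult_x_tail])
        (simp_all add: nc_mult_distrib_right reducible_zero)
    subgoal by (rule reducible_letter_step[OF s _ nc_cong_eq_trans[OF X_mult_tail nc_cong_refl]])
        (auto intro!: reducible_abg_xyz simp: xyz_deg_def simp del: xyz_word_simps)
    done
qed

lemma reducible_Y_mult:
  assumes deg: "2 * (i + j + l) + xyz_deg e1 e2 e3 = k"
  shows "reducible (Suc k) (Y \<odot> (abg i j l \<odot> xyz e1 e2 e3))"
proof -
  obtain s where s: "skew s Y (abg i j l)" using letter_skew_abg[of 1 i j l] by auto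
  show ?thesis
    using deg
    apply (induct e1; induct e2)
    subgoal by (rule reducible_letter_step[OF s _ Y_mult_xy_tail])
        (auto simp: nc_mult_distrib_right xyz_deg_def simp del: xyz_word_simps
          intro!: reducible_uminus reducible_scale reducible_abg_alpha)
    subgoal by (rule reducible_letter_step[OF s _ nc_cong_eq_trans[OF Y_mult_x_tail nc_cong_refl]])
        (auto simp: nc_mult_distrib_right xyz_deg_def simp del: xyz_word_simps
          intro!: reducible_diff reducible_scale reducible_abg_xyz reducible_abg_alpha)
    subgoal by (rule reducible_letter_step[OF s _ Y_mult_y_tail])
        (simp_all add: nc_mult_distrib_right reducible_zero)
    subgoal by (rule reducible_letter_step[OF s _ nc_cong_eq_trans[OF Y_mult_tail nc_cong_refl]])
        (auto intro!: reducible_abg_xyz simp: xyz_deg_def simp del: xyz_word_simps)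
    done
qed

lemma reducible_Z_mult:
  assumes deg: "2 * (i + j + l) + xyz_deg e1 e2 e3 = k"
  shows "reducible (Suc k) (Z \<odot> (abg i j l \<odot> xyz e1 e2 e3))"
proof -
  obtain s where s: "skew s Z (abg i j l)" using letter_skew_abg[of 2 i j l] by auto
  note step = reducible_letter_step[OF s]
  show ?thesis
    using deg
    apply (induct e1; induct e2; induct e3)
    subgoal by (rule step[OF _ Z_mult_xyz])
        (auto simp: nc_mult_distrib_right xyz_deg_def simp del: xyz_word_simps
          intro!: reducible_add reducible_diff reducible_uminus reducible_abg_beta reducible_abg_gamma)
    subgoal by (rule step[OF _ Z_mult_xy])
        (auto simp: nc_mult_distrib_right xyz_deg_def simp del: xyz_word_simps
          intro!: reducible_add reducible_diff reducible_abg_xyz reducible_abg_beta reducible_abg_gamma)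
    subgoal by (rule step[OF _ Z_mult_xz])
        (auto simp: nc_mult_distrib_right xyz_deg_def simp del: xyz_word_simps intro!: reducible_abg_gamma)
    subgoal by (rule step[OF _ nc_cong_eq_trans[OF Z_mult_x nc_cong_refl]])
        (auto simp: nc_mult_distrib_right xyz_deg_def simp del: xyz_word_simps
          intro!: reducible_add reducible_scale reducible_abg_xyz reducible_abg_gamma)
    subgoal by (rule step[OF _ Z_mult_yz])
        (auto simp: nc_mult_distrib_right xyz_deg_def simp del: xyz_word_simps
          intro!: reducible_uminus reducible_scale reducible_abg_beta)
    subgoal by (rule step[OF _ nc_cong_eq_trans[OF Z_mult_y nc_cong_refl]])
        (auto simp: nc_mult_distrib_right xyz_deg_def simp del: xyz_word_simps
          intro!: reducible_diff reducible_scale reducible_abg_xyz reducible_abg_beta)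
    subgoal by (rule step[OF _ Z_mult_z]) (simp_all add: nc_mult_distrib_right reducible_zero)
    subgoal by (rule step[OF _ nc_cong_eq_trans[OF Z_mult_1 nc_cong_refl]])
        (auto intro!: reducible_abg_xyz simp: xyz_deg_def simp del: xyz_word_simps)
    done
qed

lemma reducible_letter_mult:
  assumes c: "c \<in> {0,1,2}" and f: "reducible k f"
  shows "reducible (Suc k) (nc_mon [c] \<odot> f)"
proof -
  obtain g where g: "g \<in> ncv.span (normal_mon ` monomial_exponents k)" "f \<doteq> g"
    using f unfolding reducible_def by blast
  let ?S = "{g. reducible (Suc k) (nc_mon [c] \<odot> g)}"
  have "ncv.subspace ?S"
    unfolding ncv.subspace_def mem_Collect_eq
    by (simp add: nc_mult_zero_right nc_mult_add_right nc_mult_scale_right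
        reducible_zero reducible_add reducible_scale)
  moreover have "normal_mon ` monomial_exponents k \<subseteq> ?S"
  proof
    fix x assume "x \<in> normal_mon ` monomial_exponents k"
    then obtain a b d where x: "x = normal_mon (a, b, d)" "a + b + d = k"
      by (auto simp: monomial_exponents_def)
    then have deg: "2 * (a div 2 + b div 2 + d div 2) + xyz_deg (odd a) (odd b) (odd d) = k"
      using xyz_deg_odd[of a b d] by simp
    show "x \<in> ?S"
      using c reducible_X_mult[OF deg] reducible_Y_mult[OF deg] reducible_Z_mult[OF deg] x(1)
      by (auto simp: normal_mon_def)
  qed
  ultimately have "reducible (Suc k) (nc_mon [c] \<odot> g)"
    using ncv.span_minimal g(1) by blast
  moreover have "nc_mon [c] \<odot> f \<doteq> nc_mon [c] \<odot> g"
    using g(2) c by (intro nc_cong_mult_left) auto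
  ultimately show ?thesis using reducible_cong by blast
qed

lemma reducible_mon: "set w \<subseteq> {0,1,2} \<Longrightarrow> reducible (length w) (nc_mon w)"
proof (induction w)
  case Nil
  have "abg 0 0 0 \<odot> xyz False False False = nc_mon []"
    by (simp add: abg_def nc_mon_Nil_mult)
  then show ?case using reducible_abg_xyz[of 0 0 0 False False False 0] by (simp add: xyz_deg_def)
next
  case (Cons c w)
  then show ?case using reducible_letter_mult[of c "length w" "nc_mon w"] by (simp add: nc_mon_mult)
qed

lemma ncpoly_deg_subset_span:
  "ncpoly_deg k \<subseteq> ncv.span ((I \<inter> ncpoly_deg k) \<union> normal_mon ` monomial_exponents k)"
  (is "_ \<subseteq> ncv.span (?K \<union> ?N)")
proof -
  have "nc_mon w \<in> ncv.span (?K \<union> ?N)" if w: "w \<in> words k" for w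
  proof -
    obtain g where g: "g \<in> ncv.span ?N" "nc_mon w \<doteq> g"
      using w reducible_mon[of w] by (auto simp: words_def reducible_def)
    have "g \<in> ncpoly_deg k"
      using g(1) ncpoly_deg_normal_mon ncv.span_minimal[OF _ ncpoly_deg_subspace] by blast
    moreover have "nc_mon w \<in> ncpoly_deg k"
      using w by (simp add: words_def ncpoly_deg_mon)
    ultimately have "nc_mon w - g \<in> ?K"
      using g(2) by (auto simp: nc_cong_def intro: ncpoly_deg_diff)
    then have "nc_mon w - g \<in> ncv.span (?K \<union> ?N)"
      by (intro ncv.span_base) simp
    moreover have "g \<in> ncv.span (?K \<union> ?N)"
      using g(1) ncv.span_mono[of ?N "?K \<union> ?N"] by blast
    ultimately have "(nc_mon w - g) + g \<in> ncv.span (?K \<union> ?N)"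
      by (rule ncv.span_add)
    then show ?thesis by simp
  qed
  then have "ncv.span (nc_mon ` words k) \<subseteq> ncv.span (?K \<union> ?N)"
    using ncv.span_minimal ncv.subspace_span by blast
  then show ?thesis using ncpoly_deg_subset_span_words by blast
qed

end

section \<open>A representation of \<open>T\<^sub>t\<close>\<close>

type_synonym idx = "int \<times> int \<times> int \<times> bool \<times> bool \<times> bool"
type_synonym cvec = "idx \<Rightarrow> complex"

definition tpow :: "complex \<Rightarrow> int \<Rightarrow> complex" where
  "tpow t n = (-t) powi n"

text \<open>Left multiplication by \<open>x, y, z\<close> on \<open>T\<^sub>t\<close>, written in the basis vectors
  \<open>(i, j, l, e\<^sub>1, e\<^sub>2, e\<^sub>3) \<leftrightarrow> \<alpha>\<^sup>i \<beta>\<^sup>j \<gamma>\<^sup>l x\<^sup>e\<^sup>1 y\<^sup>e\<^sup>2 z\<^sup>e\<^sup>3\<close>; the exponents range over \<open>\<int>\<close>,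
  so that no boundary cases arise.\<close>

fun act_x :: "complex \<Rightarrow> cvec \<Rightarrow> cvec" where
  "act_x t f (i,j,l,True,e2,e3) = tpow t (i - l) * f(i,j,l,False,e2,e3)"
| "act_x t f (i,j,l,False,e2,e3) = 0"

fun act_y :: "complex \<Rightarrow> cvec \<Rightarrow> cvec" where
  "act_y t f (i,j,l,False,True,e3) = tpow t (j - i) * f(i,j,l,False,False,e3) + tpow t (l - i) * f(i-1,j,l,True,True,e3)"
| "act_y t f (i,j,l,True,True,e3) = - tpow t (j - i - 1) * f(i,j,l,True,False,e3)"
| "act_y t f (i,j,l,False,False,e3) = tpow t (l - i) * f(i-1,j,l,True,False,e3)"
| "act_y t f (i,j,l,True,False,e3) = 0"

fun act_z :: "complex \<Rightarrow> cvec \<Rightarrow> cvec" where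
  "act_z t f (i,j,l,False,False,False) = tpow t (-j) * f(i,j-1,l,False,True,False) + tpow t (l - 1 - j) * f(i,j,l-1,True,False,False)"
| "act_z t f (i,j,l,False,False,True) = tpow t (l - j) * f(i,j,l,False,False,False) + tpow t (-j) * f(i,j-1,l,False,True,True) + tpow t (l - 1 - j) * f(i,j,l-1,True,False,True)"
| "act_z t f (i,j,l,False,True,False) = tpow t (l - 1 - j) * f(i,j,l-1,True,True,False)"
| "act_z t f (i,j,l,False,True,True) = - tpow t (l - j - 1) * f(i,j,l,False,True,False) + tpow t (l - 1 - j) * f(i,j,l-1,True,True,True)"
| "act_z t f (i,j,l,True,False,False) = - tpow t (1 - j) * f(i,j-1,l,True,True,False)"
| "act_z t f (i,j,l,True,False,True) = - tpow t (l - j + 1) * f(i,j,l,True,False,False) - tpow t (1 - j) * f(i,j-1,l,True,True,True)"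
| "act_z t f (i,j,l,True,True,False) = 0"
| "act_z t f (i,j,l,True,True,True) = tpow t (l - j) * f(i,j,l,True,True,False)"

lemma tpow_add: "t \<noteq> 0 \<Longrightarrow> tpow t m * tpow t n = tpow t (m + n)"
  by (simp add: tpow_def power_int_add)

lemma tpow_mult_assoc: "t \<noteq> 0 \<Longrightarrow> tpow t m * (tpow t n * x) = tpow t (m + n) * x"
  by (simp add: tpow_add mult.assoc[symmetric])

lemma tpow_nonzero: "t \<noteq> 0 \<Longrightarrow> tpow t n \<noteq> 0"
  by (simp add: tpow_def)

lemma tpow_0: "tpow t 0 = 1"
  and tpow_1: "tpow t 1 = - t"
  by (simp_all add: tpow_def)

lemma act_x_act_x: "act_x t (act_x t f) q = 0"
proof (cases q)
  case (fields i j l e1 e2 e3)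
  then show ?thesis by (cases e1) simp_all
qed

lemma act_y_act_y:
  assumes "t \<noteq> 0"
  shows "act_y t (act_y t f) q = 0"
proof (cases q)
  case (fields i j l e1 e2 e3)
  then show ?thesis using assms by (cases e1; cases e2; cases e3) (simp_all add: tpow_add tpow_mult_assoc algebra_simps)
qed

lemma act_z_act_z:
  assumes "t \<noteq> 0"
  shows "act_z t (act_z t f) q = 0"
proof (cases q)
  case (fields i j l e1 e2 e3)
  then show ?thesis using assms by (cases e1; cases e2; cases e3) (simp_all add: tpow_add tpow_mult_assoc algebra_simps)
qed

lemma act_r1:
  assumes "t \<noteq> 0"
  shows "act_z t (act_x t (act_y t f)) q - act_y t (act_z t (act_x t f)) q
    + tpow t 1 * act_x t (act_z t (act_y t f)) q - tpow t 1 * act_y t (act_x t (act_z t f)) q = 0"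
proof (cases q)
  case (fields i j l e1 e2 e3)
  then show ?thesis using assms by (cases e1; cases e2; cases e3) (simp_all add: tpow_add tpow_mult_assoc algebra_simps)
qed

lemma act_r2:
  assumes "t \<noteq> 0"
  shows "- tpow t 1 * act_z t (act_y t (act_x t f)) q + tpow t 1 * act_x t (act_z t (act_y t f)) q
    - act_y t (act_z t (act_x t f)) q + act_x t (act_y t (act_z t f)) q = 0"
proof (cases q)
  case (fields i j l e1 e2 e3)
  then show ?thesis using assms by (cases e1; cases e2; cases e3) (simp_all add: tpow_add tpow_mult_assoc algebra_simps)
qed


definition act_letter :: "complex \<Rightarrow> nat \<Rightarrow> cvec \<Rightarrow> cvec" where
  "act_letter t c = (if c = 0 then act_x t else if c = 1 then act_y t else if c = 2 then act_z t else (\<lambda>f q. 0))"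

lemma act_xyz_linear:
  fixes L :: "cvec \<Rightarrow> cvec"
  assumes "L \<in> {act_x t, act_y t, act_z t}"
  shows "L (\<lambda>q. a * f q + b * g q) q = a * L f q + b * L g q"
proof (cases q)
  case (fields i j l e1 e2 e3)
  then show ?thesis using assms by (cases e1; cases e2; cases e3) (auto simp: algebra_simps)
qed

lemma act_letter_lin: "act_letter t c (\<lambda>q. a * f q + b * g q) = (\<lambda>q. a * act_letter t c f q + b * act_letter t c g q)"
  unfolding act_letter_def using act_xyz_linear[of _ t] by (auto simp: fun_eq_iff)

lemma act_letter_add: "act_letter t c (\<lambda>q. f q + g q) = (\<lambda>q. act_letter t c f q + act_letter t c g q)"
  using act_letter_lin[of t c 1 f 1 g] by simp

lemma act_letter_scale: "act_letter t c (\<lambda>q. a * f q) = (\<lambda>q. a * act_letter t c f q)"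
  using act_letter_lin[of t c a f 0 f] by simp

lemma act_letter_zero: "act_letter t c (\<lambda>q. 0) = (\<lambda>q. 0)"
  using act_letter_lin[of t c 0 "\<lambda>q. 0" 0 "\<lambda>q. 0"] by simp

lemma act_letter_sum: "act_letter t c (\<lambda>q. \<Sum>k\<in>A. h k q) = (\<lambda>q. \<Sum>k\<in>A. act_letter t c (h k) q)"
proof (induction A rule: infinite_finite_induct)
  case (infinite A) then show ?case by (simp add: act_letter_zero)
next
  case empty then show ?case by (simp add: act_letter_zero)
next
  case (insert x F)
  then show ?case by (simp add: act_letter_add)
qed

fun act_word :: "complex \<Rightarrow> nat list \<Rightarrow> cvec \<Rightarrow> cvec" where
  "act_word t [] m = m"
| "act_word t (c # w) m = act_letter t c (act_word t w m)"

lemma act_word_append: "act_word t (u @ v) m = act_word t u (act_word t v m)"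
  by (induction u) auto

lemma act_word_scale: "act_word t w (\<lambda>q. a * f q) = (\<lambda>q. a * act_word t w f q)"
  by (induction w) (auto simp: act_letter_scale)
lemma act_word_zero: "act_word t w (\<lambda>q. 0) = (\<lambda>q. 0)"
  by (induction w) (auto simp: act_letter_zero)
lemma act_word_sum: "act_word t w (\<lambda>q. \<Sum>k\<in>A. h k q) = (\<lambda>q. \<Sum>k\<in>A. act_word t w (h k) q)"
  by (induction w) (auto simp: act_letter_sum)

definition rep :: "complex \<Rightarrow> ncp \<Rightarrow> cvec \<Rightarrow> cvec" where
  "rep t f m = (\<lambda>q. \<Sum>w\<in>nc_supp f. f w * act_word t w m q)"

lemma rep_eq_sum: assumes "finite A" "nc_supp f \<subseteq> A" shows "rep t f m = (\<lambda>q. \<Sum>w\<in>A. f w * act_word t w m q)"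
  unfolding rep_def using assms by (auto intro!: sum.mono_neutral_left simp: nc_supp_def fun_eq_iff)

lemma rep_add: assumes "f \<in> ncpoly" "g \<in> ncpoly" shows "rep t (f + g) m = (\<lambda>q. rep t f m q + rep t g m q)"
proof -
  have fin: "finite (nc_supp f \<union> nc_supp g)" using assms by (simp add: ncpoly_iff)
  have "nc_supp (f + g) \<subseteq> nc_supp f \<union> nc_supp g" by (auto simp: nc_supp_def)
  then show ?thesis
    using rep_eq_sum[OF fin, of "f + g"] rep_eq_sum[OF fin, of f] rep_eq_sum[OF fin, of g]
    by (simp add: algebra_simps sum.distrib)
qed

lemma rep_scale: assumes "f \<in> ncpoly" shows "rep t (c *: f) m = (\<lambda>q. c * rep t f m q)"
proof -
  have fin: "finite (nc_supp f)" using assms by (simp add: ncpoly_iff)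
  have "nc_supp (c *: f) \<subseteq> nc_supp f" by (auto simp: nc_supp_def nc_scale_def)
  then show ?thesis
    using rep_eq_sum[OF fin, of "c *: f"] rep_eq_sum[OF fin, of f]
    by (simp add: nc_scale_def sum_distrib_left mult.assoc)
qed

lemma rep_uminus: assumes "f \<in> ncpoly" shows "rep t (- f) m = (\<lambda>q. - rep t f m q)"
proof -
  have "- f = (-1) *: f" by (simp add: nc_scale_def fun_eq_iff)
  then show ?thesis using rep_scale[OF assms, of t "-1" m] by simp
qed

lemma rep_diff: assumes "f \<in> ncpoly" "g \<in> ncpoly" shows "rep t (f - g) m = (\<lambda>q. rep t f m q - rep t g m q)"
  using rep_add[of f "- g" t m] rep_uminus[of g t m] assms ncpoly_uminus[of g] by simp

lemma rep_mon: "rep t (nc_mon w) m = act_word t w m"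
proof -
  have "nc_supp (nc_mon w) = {w}" by (auto simp: nc_supp_def nc_mon_def)
  then show ?thesis by (simp add: rep_def nc_mon_def)
qed

lemma rep_scale_vec: "rep t f (\<lambda>q. a * m q) = (\<lambda>q. a * rep t f m q)"
  by (simp add: rep_def act_word_scale sum_distrib_left algebra_simps)

lemma rep_zero_vec: "rep t f (\<lambda>q. 0) = (\<lambda>q. 0)"
  by (simp add: rep_def act_word_zero)

lemma rep_mult:
  assumes f: "f \<in> ncpoly" and g: "g \<in> ncpoly"
  shows "rep t (f \<odot> g) m = rep t f (rep t g m)"
proof -
  let ?Sf = "nc_supp f" and ?Sg = "nc_supp g"
  have ff: "finite ?Sf" and fg: "finite ?Sg" using f g by (auto simp: ncpoly_iff)
  let ?A = "(\<lambda>(u,v). u @ v) ` (?Sf \<times> ?Sg)"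
  have fA: "finite ?A" using ff fg by auto
  have tl: "\<And>a b::nat list. take (length a) (a @ b) = a" "\<And>a b::nat list. drop (length a) (a @ b) = b" by simp_all
  have fS: "finite (Sigma ?A (\<lambda>w. {..length w}))" using fA by auto
  have "rep t (f \<odot> g) m q = rep t f (rep t g m) q" for q
  proof -
    define F where "F = (\<lambda>u v. f u * g v * act_word t (u @ v) m q)"
    have "rep t (f \<odot> g) m q = (\<Sum>w\<in>?A. (f \<odot> g) w * act_word t w m q)"
      using rep_eq_sum[OF fA nc_supp_mult] by simp
    also have "\<dots> = (\<Sum>w\<in>?A. \<Sum>i\<le>length w. F (take i w) (drop i w))"
      unfolding nc_mult_def F_def by (simp add: sum_distrib_right)
    also have "\<dots> = (\<Sum>(w,i)\<in>Sigma ?A (\<lambda>w. {..length w}). F (take i w) (drop i w))"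
      by (rule sum.Sigma) (use fA in auto)
    also have "\<dots> = (\<Sum>(w,i)\<in>{(w,i). (w,i) \<in> Sigma ?A (\<lambda>w. {..length w}) \<and> take i w \<in> ?Sf \<and> drop i w \<in> ?Sg}. F (take i w) (drop i w))"
      by (rule sum.mono_neutral_right) (use fS in \<open>auto simp: F_def nc_supp_def\<close>)
    also have "\<dots> = (\<Sum>(u,v)\<in>?Sf \<times> ?Sg. F u v)"
      by (rule sum.reindex_bij_witness[of _ "\<lambda>(u,v). (u @ v, length u)" "\<lambda>(w,i). (take i w, drop i w)"])
         (auto simp: image_iff tl simp del: take_append drop_append)
    also have "\<dots> = (\<Sum>u\<in>?Sf. f u * (\<Sum>v\<in>?Sg. g v * act_word t u (act_word t v m) q))"
      unfolding F_def sum.cartesian_product[symmetric] act_word_append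
      by (simp add: sum_distrib_left mult.assoc)
    also have "\<dots> = rep t f (rep t g m) q"
      unfolding rep_def act_word_sum[symmetric] by (simp add: act_word_sum act_word_scale sum_distrib_left)
    finally show ?thesis .
  qed
  then show ?thesis by auto
qed


definition unit_vec :: "idx \<Rightarrow> cvec" where "unit_vec p = (\<lambda>q. if q = p then 1 else 0)"

lemma act_x_unit_vec: "act_x t (unit_vec (i,j,l,False,e2,e3)) = (\<lambda>q. tpow t (i - l) * unit_vec (i,j,l,True,e2,e3) q)"
proof
  fix q show "act_x t (unit_vec (i,j,l,False,e2,e3)) q = tpow t (i - l) * unit_vec (i,j,l,True,e2,e3) q"
  proof (cases q)
    case (fields i' j' l' e1' e2' e3')
    then show ?thesis by (cases e1') (auto simp: unit_vec_def)
  qed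
qed

lemma act_y_unit_vec: "act_y t (unit_vec (i,j,l,False,False,e3)) = (\<lambda>q. tpow t (j - i) * unit_vec (i,j,l,False,True,e3) q)"
proof
  fix q show "act_y t (unit_vec (i,j,l,False,False,e3)) q = tpow t (j - i) * unit_vec (i,j,l,False,True,e3) q"
  proof (cases q)
    case (fields i' j' l' e1' e2' e3')
    then show ?thesis by (cases e1'; cases e2') (auto simp: unit_vec_def)
  qed
qed

lemma act_z_unit_vec: "act_z t (unit_vec (i,j,l,False,False,False)) = (\<lambda>q. tpow t (l - j) * unit_vec (i,j,l,False,False,True) q)"
proof
  fix q show "act_z t (unit_vec (i,j,l,False,False,False)) q = tpow t (l - j) * unit_vec (i,j,l,False,False,True) q"
  proof (cases q)
    case (fields i' j' l' e1' e2' e3')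
    then show ?thesis by (cases e1'; cases e2'; cases e3') (auto simp: unit_vec_def)
  qed
qed

lemma act_letter_simps: "act_letter t 0 = act_x t" "act_letter t (Suc 0) = act_y t" "act_letter t 2 = act_z t"
  by (simp_all add: act_letter_def)

lemma act_x_scale: "act_x t (\<lambda>q. a * f q) = (\<lambda>q. a * act_x t f q)"
  and act_y_scale: "act_y t (\<lambda>q. a * f q) = (\<lambda>q. a * act_y t f q)"
  and act_z_scale: "act_z t (\<lambda>q. a * f q) = (\<lambda>q. a * act_z t f q)"
  using act_letter_scale[of t 0 a f] act_letter_scale[of t 1 a f] act_letter_scale[of t 2 a f]
  by (simp_all add: act_letter_simps)

lemma rep_zero: "rep t 0 m = (\<lambda>q. 0)"
  by (simp add: rep_def nc_supp_def)

lemma rep_sum_scale: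
  assumes "finite T" "b ` T \<subseteq> ncpoly"
  shows "rep t (\<Sum>y\<in>T. c y *: b y) m = (\<lambda>q. \<Sum>y\<in>T. c y * rep t (b y) m q)"
  using assms
proof (induction T rule: finite_induct)
  case empty
  then show ?case by (simp add: rep_def nc_supp_def)
next
  case (insert y T)
  then have b: "b y \<in> ncpoly" and sum: "(\<Sum>y\<in>T. c y *: b y) \<in> ncpoly"
    by (auto intro: ncpoly_sum)
  have "rep t (\<Sum>y\<in>insert y T. c y *: b y) m = rep t (c y *: b y + (\<Sum>y\<in>T. c y *: b y)) m"
    by (simp only: sum.insert[OF insert.hyps])
  also have "\<dots> = (\<lambda>q. rep t (c y *: b y) m q + rep t (\<Sum>y\<in>T. c y *: b y) m q)"
    using b sum by (intro rep_add) auto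
  also have "\<dots> = (\<lambda>q. c y * rep t (b y) m q + (\<Sum>y\<in>T. c y * rep t (b y) m q))"
    using insert b by (simp add: rep_scale)
  also have "\<dots> = (\<lambda>q. \<Sum>y\<in>insert y T. c y * rep t (b y) m q)"
    using insert.hyps by simp
  finally show ?case .
qed

lemma rep_nc_ideal:
  assumes "G \<subseteq> ncpoly" "\<And>g m. g \<in> G \<Longrightarrow> rep t g m = (\<lambda>q. 0)" "f \<in> nc_ideal G"
  shows "rep t f m = (\<lambda>q. 0)"
proof -
  let ?S = "{f. f \<in> ncpoly \<and> (\<forall>m. rep t f m = (\<lambda>q. 0))}"
  have "nc_ideal G \<subseteq> ?S"
  proof (rule nc_ideal_subset)
    show "ncv.subspace ?S"
      unfolding ncv.subspace_def by (simp add: rep_zero rep_add rep_scale)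
    show "a \<odot> g \<odot> b \<in> ?S" if "a \<in> ncpoly" "g \<in> G" "b \<in> ncpoly" for a g b
      using that assms(1,2) by (auto simp: rep_mult rep_zero_vec)
  qed
  with assms(3) show ?thesis by blast
qed

definition unit_multiple :: "idx \<Rightarrow> cvec \<Rightarrow> bool" where
  "unit_multiple p v \<longleftrightarrow> (\<exists>c. c \<noteq> 0 \<and> v = (\<lambda>q. c * unit_vec p q))"

lemma unit_multiple_scaled: "c \<noteq> 0 \<Longrightarrow> unit_multiple p (\<lambda>q. c * unit_vec p q)"
  unfolding unit_multiple_def by blast

lemma unit_multiple_unit_vec: "unit_multiple p (unit_vec p)"
  using unit_multiple_scaled[of 1 p] by simp

lemma unit_multiple_scale:
  assumes "c \<noteq> 0" "unit_multiple p v"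
  shows "unit_multiple p (\<lambda>q. c * v q)"
proof -
  obtain d where "d \<noteq> 0" "v = (\<lambda>q. d * unit_vec p q)"
    using assms(2) unfolding unit_multiple_def by blast
  with assms(1) show ?thesis
    using unit_multiple_scaled[of "c * d" p] by (simp add: mult.assoc)
qed

lemma unit_multiple_rep:
  assumes "unit_multiple p v" "unit_multiple p' (rep t f (unit_vec p))"
  shows "unit_multiple p' (rep t f v)"
proof -
  obtain d where "d \<noteq> 0" "v = (\<lambda>q. d * unit_vec p q)"
    using assms(1) unfolding unit_multiple_def by blast
  with assms(2) show ?thesis by (simp add: rep_scale_vec unit_multiple_scale)
qed

lemma unit_multiple_act_x:
  assumes "t \<noteq> 0" "unit_multiple (i,j,l,False,e2,e3) v"
  shows "unit_multiple (i,j,l,True,e2,e3) (act_x t v)"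
proof -
  obtain d where d: "d \<noteq> 0" "v = (\<lambda>q. d * unit_vec (i,j,l,False,e2,e3) q)"
    using assms(2) unfolding unit_multiple_def by blast
  then have "act_x t v = (\<lambda>q. d * (tpow t (i - l) * unit_vec (i,j,l,True,e2,e3) q))"
    by (simp add: act_x_scale act_x_unit_vec)
  moreover have "unit_multiple (i,j,l,True,e2,e3) (\<lambda>q. d * (tpow t (i - l) * unit_vec (i,j,l,True,e2,e3) q))"
    by (rule unit_multiple_scale[OF d(1) unit_multiple_scaled[OF tpow_nonzero[OF assms(1)]]])
  ultimately show ?thesis by simp
qed

lemma unit_multiple_act_y:
  assumes "t \<noteq> 0" "unit_multiple (i,j,l,False,False,e3) v"
  shows "unit_multiple (i,j,l,False,True,e3) (act_y t v)"
proof -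
  obtain d where d: "d \<noteq> 0" "v = (\<lambda>q. d * unit_vec (i,j,l,False,False,e3) q)"
    using assms(2) unfolding unit_multiple_def by blast
  then have "act_y t v = (\<lambda>q. d * (tpow t (j - i) * unit_vec (i,j,l,False,True,e3) q))"
    by (simp add: act_y_scale act_y_unit_vec)
  moreover have "unit_multiple (i,j,l,False,True,e3) (\<lambda>q. d * (tpow t (j - i) * unit_vec (i,j,l,False,True,e3) q))"
    by (rule unit_multiple_scale[OF d(1) unit_multiple_scaled[OF tpow_nonzero[OF assms(1)]]])
  ultimately show ?thesis by simp
qed

lemma unit_multiple_act_z:
  assumes "t \<noteq> 0" "unit_multiple (i,j,l,False,False,False) v"
  shows "unit_multiple (i,j,l,False,False,True) (act_z t v)"
proof -
  obtain d where d: "d \<noteq> 0" "v = (\<lambda>q. d * unit_vec (i,j,l,False,False,False) q)"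
    using assms(2) unfolding unit_multiple_def by blast
  then have "act_z t v = (\<lambda>q. d * (tpow t (l - j) * unit_vec (i,j,l,False,False,True) q))"
    by (simp add: act_z_scale act_z_unit_vec)
  moreover have "unit_multiple (i,j,l,False,False,True) (\<lambda>q. d * (tpow t (l - j) * unit_vec (i,j,l,False,False,True) q))"
    by (rule unit_multiple_scale[OF d(1) unit_multiple_scaled[OF tpow_nonzero[OF assms(1)]]])
  ultimately show ?thesis by simp
qed

lemma rep_xyz:
  assumes "t \<noteq> 0"
  shows "unit_multiple (i,j,l,e1,e2,e3) (rep t (xyz e1 e2 e3) (unit_vec (i,j,l,False,False,False)))"
  by (cases e1; cases e2; cases e3)
    (simp_all add: rep_mon act_letter_simps assms unit_multiple_unit_vec
      unit_multiple_act_x unit_multiple_act_y unit_multiple_act_z)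

definition exponent_idx :: "nat \<times> nat \<times> nat \<Rightarrow> idx" where
  "exponent_idx = (\<lambda>(a, b, c). (int (a div 2), int (b div 2), int (c div 2), odd a, odd b, odd c))"

lemma eq_of_div_2_odd:
  fixes a b :: nat
  assumes "a div 2 = b div 2" "odd a = odd b"
  shows "a = b"
proof -
  have "a = 2 * (a div 2) + of_bool (odd a)" by (rule double_div_2_plus_odd[symmetric])
  also have "\<dots> = 2 * (b div 2) + of_bool (odd b)" using assms by simp
  also have "\<dots> = b" by (rule double_div_2_plus_odd)
  finally show ?thesis .
qed

lemma inj_exponent_idx: "inj exponent_idx"
proof (rule injI)
  fix y y' assume eq: "exponent_idx y = exponent_idx y'"
  obtain a b c a' b' c' where y: "y = (a, b, c)" "y' = (a', b', c')"
    by (cases y, cases y')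
  with eq show "y = y'"
    by (auto simp: exponent_idx_def intro: eq_of_div_2_odd)
qed

lemma act_alpha_unit_vec:
  assumes "t \<noteq> 0"
  shows "(\<lambda>q. act_x t (act_y t (unit_vec (i,j,l,False,False,False))) q
      + tpow t 1 * act_y t (act_x t (unit_vec (i,j,l,False,False,False))) q)
    = unit_vec (i + 1,j,l,False,False,False)"
proof
  fix q show "act_x t (act_y t (unit_vec (i,j,l,False,False,False))) q
      + tpow t 1 * act_y t (act_x t (unit_vec (i,j,l,False,False,False))) q
    = unit_vec (i + 1,j,l,False,False,False) q"
  proof (cases q)
    case (fields i' j' l' e1 e2 e3)
    with assms show ?thesis
      by (cases e1; cases e2; cases e3) (auto simp: unit_vec_def tpow_add tpow_mult_assoc tpow_0 algebra_simps)
  qed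
qed

lemma act_beta_unit_vec:
  assumes "t \<noteq> 0"
  shows "(\<lambda>q. act_y t (act_z t (unit_vec (i,j,l,False,False,False))) q
      + tpow t 1 * act_z t (act_y t (unit_vec (i,j,l,False,False,False))) q)
    = (\<lambda>q. tpow t (-i) * unit_vec (i,j + 1,l,False,False,False) q)"
proof
  fix q show "act_y t (act_z t (unit_vec (i,j,l,False,False,False))) q
      + tpow t 1 * act_z t (act_y t (unit_vec (i,j,l,False,False,False))) q
    = tpow t (-i) * unit_vec (i,j + 1,l,False,False,False) q"
  proof (cases q)
    case (fields i' j' l' e1 e2 e3)
    with assms show ?thesis
      by (cases e1; cases e2; cases e3) (auto simp: unit_vec_def tpow_add tpow_mult_assoc tpow_0 algebra_simps)
  qed
qed

lemma act_gamma_unit_vec: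
  assumes "t \<noteq> 0"
  shows "(\<lambda>q. act_z t (act_x t (unit_vec (i,j,l,False,False,False))) q
      + tpow t 1 * act_x t (act_z t (unit_vec (i,j,l,False,False,False))) q)
    = (\<lambda>q. tpow t (i - j) * unit_vec (i,j,l + 1,False,False,False) q)"
proof
  fix q show "act_z t (act_x t (unit_vec (i,j,l,False,False,False))) q
      + tpow t 1 * act_x t (act_z t (unit_vec (i,j,l,False,False,False))) q
    = tpow t (i - j) * unit_vec (i,j,l + 1,False,False,False) q"
  proof (cases q)
    case (fields i' j' l' e1 e2 e3)
    with assms show ?thesis
      by (cases e1; cases e2; cases e3) (auto simp: unit_vec_def tpow_add tpow_mult_assoc tpow_0 algebra_simps)
  qed
qed

context T_algebra
begin

lemma ncpoly_r1: "r1 t \<in> ncpoly"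
  and ncpoly_r2: "r2 t \<in> ncpoly"
  by (simp_all add: r1_def r2_def)

lemma rep_r1: "rep t (r1 t) m = (\<lambda>q. 0)"
proof
  fix q
  have "rep t (r1 t) m q = act_z t (act_x t (act_y t m)) q - act_y t (act_z t (act_x t m)) q
      + tpow t 1 * act_x t (act_z t (act_y t m)) q - tpow t 1 * act_y t (act_x t (act_z t m)) q"
    unfolding r1_def by (simp add: rep_add rep_diff rep_scale rep_mon act_letter_simps tpow_1)
  also have "\<dots> = 0" by (rule act_r1[OF t_nonzero])
  finally show "rep t (r1 t) m q = 0" .
qed

lemma rep_r2: "rep t (r2 t) m = (\<lambda>q. 0)"
proof
  fix q
  have "rep t (r2 t) m q = - tpow t 1 * act_z t (act_y t (act_x t m)) q + tpow t 1 * act_x t (act_z t (act_y t m)) q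
      - act_y t (act_z t (act_x t m)) q + act_x t (act_y t (act_z t m)) q"
    unfolding r2_def by (simp add: rep_add rep_diff rep_scale rep_mon act_letter_simps tpow_1)
  also have "\<dots> = 0" by (rule act_r2[OF t_nonzero])
  finally show "rep t (r2 t) m q = 0" .
qed

lemma rep_T_rels: "g \<in> T_rels \<omega> t \<Longrightarrow> rep t g m = (\<lambda>q. 0)"
proof -
  assume g: "g \<in> T_rels \<omega> t"
  have "rep t (nc_mon [c,c]) m = (\<lambda>q. 0)" if "c \<in> {0,1,2}" for c
    using that act_x_act_x[of t] act_y_act_y[OF t_nonzero] act_z_act_z[OF t_nonzero]
    by (auto simp: rep_mon act_letter_simps fun_eq_iff)
  moreover have "rep t (v1 \<omega> t) m = (\<lambda>q. 0)" "rep t (v2 \<omega> t) m = (\<lambda>q. 0)"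
    unfolding v1_eq_r1_r2[OF omega_sq] v2_eq_r1_r2[OF omega_sq]
    by (simp_all add: ncpoly_r1 ncpoly_r2 rep_add rep_scale rep_r1 rep_r2)
  ultimately show ?thesis using g by (auto simp: T_rels_def nc_mon_mult)
qed

lemma rep_I: "f \<in> I \<Longrightarrow> rep t f m = (\<lambda>q. 0)"
  using rep_nc_ideal[OF T_rels_subset_ncpoly rep_T_rels] .

lemma rep_alpha: "rep t \<alpha> (unit_vec (i,j,l,False,False,False)) = unit_vec (i + 1,j,l,False,False,False)"
  unfolding alpha_eq using act_alpha_unit_vec[OF t_nonzero, of i j l]
  by (simp add: rep_diff rep_scale rep_mon act_letter_simps tpow_1)

lemma rep_beta:
  "rep t \<beta> (unit_vec (i,j,l,False,False,False)) = (\<lambda>q. tpow t (-i) * unit_vec (i,j + 1,l,False,False,False) q)"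
  unfolding beta_eq using act_beta_unit_vec[OF t_nonzero, of i j l]
  by (simp add: rep_diff rep_scale rep_mon act_letter_simps tpow_1)

lemma rep_gamma:
  "rep t \<gamma> (unit_vec (i,j,l,False,False,False)) = (\<lambda>q. tpow t (i - j) * unit_vec (i,j,l + 1,False,False,False) q)"
  unfolding gamma_eq using act_gamma_unit_vec[OF t_nonzero, of i j l]
  by (simp add: rep_diff rep_scale rep_mon act_letter_simps tpow_1)

lemma rep_pow_alpha:
  "rep t (nc_pow \<alpha> n) (unit_vec (i,j,l,False,False,False)) = unit_vec (i + int n,j,l,False,False,False)"
  by (induction n) (simp_all add: rep_mon rep_mult rep_alpha add_ac)

lemma rep_pow_beta:
  "unit_multiple (i,j + int n,l,False,False,False) (rep t (nc_pow \<beta> n) (unit_vec (i,j,l,False,False,False)))"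
proof (induction n)
  case 0
  show ?case by (simp add: rep_mon unit_multiple_unit_vec)
next
  case (Suc n)
  have "unit_multiple (i,j + int (Suc n),l,False,False,False)
      (rep t \<beta> (unit_vec (i,j + int n,l,False,False,False)))"
    by (simp add: rep_beta add_ac unit_multiple_scaled tpow_nonzero t_nonzero)
  with Suc show ?case by (simp add: rep_mult unit_multiple_rep)
qed

lemma rep_pow_gamma:
  "unit_multiple (i,j,l + int n,False,False,False) (rep t (nc_pow \<gamma> n) (unit_vec (i,j,l,False,False,False)))"
proof (induction n)
  case 0
  show ?case by (simp add: rep_mon unit_multiple_unit_vec)
next
  case (Suc n)
  have "unit_multiple (i,j,l + int (Suc n),False,False,False)
      (rep t \<gamma> (unit_vec (i,j,l + int n,False,False,False)))"
    by (simp add: rep_gamma add_ac unit_multiple_scaled tpow_nonzero t_nonzero)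
  with Suc show ?case by (simp add: rep_mult unit_multiple_rep)
qed

text \<open>The representation separates these monomials, which gives the lower bound.\<close>

definition dual_mon :: "nat \<times> nat \<times> nat \<Rightarrow> ncp" where
  "dual_mon = (\<lambda>(a, b, c). xyz (odd a) (odd b) (odd c)
     \<odot> (nc_pow \<gamma> (c div 2) \<odot> (nc_pow \<beta> (b div 2) \<odot> nc_pow \<alpha> (a div 2))))"

lemma ncpoly_dual_mon: "dual_mon y \<in> ncpoly"
  by (simp add: dual_mon_def split: prod.split)

lemma rep_dual_mon: "unit_multiple (exponent_idx y) (rep t (dual_mon y) (unit_vec (0,0,0,False,False,False)))"
proof (cases y)
  case (fields a b c)
  let ?i = "int (a div 2)" and ?j = "int (b div 2)" and ?l = "int (c div 2)"
  let ?v\<alpha> = "rep t (nc_pow \<alpha> (a div 2)) (unit_vec (0,0,0,False,False,False))"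
  let ?v\<beta> = "rep t (nc_pow \<beta> (b div 2)) ?v\<alpha>"
  let ?v\<gamma> = "rep t (nc_pow \<gamma> (c div 2)) ?v\<beta>"
  have "?v\<alpha> = unit_vec (?i,0,0,False,False,False)"
    using rep_pow_alpha[of "a div 2" 0 0 0] by simp
  then have "unit_multiple (?i,?j,0,False,False,False) ?v\<beta>"
    using rep_pow_beta[of ?i 0 "b div 2" 0] by simp
  then have "unit_multiple (?i,?j,?l,False,False,False) ?v\<gamma>"
    using rep_pow_gamma[of ?i ?j 0 "c div 2"] by (simp add: unit_multiple_rep)
  then have "unit_multiple (?i,?j,?l,odd a,odd b,odd c) (rep t (xyz (odd a) (odd b) (odd c)) ?v\<gamma>)"
    using rep_xyz[OF t_nonzero] by (rule unit_multiple_rep)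
  then show ?thesis
    using fields by (simp add: dual_mon_def exponent_idx_def rep_mult)
qed

lemma ncpoly_deg_dual_mon: "y \<in> monomial_exponents k \<Longrightarrow> dual_mon y \<in> ncpoly_deg k"
proof (cases y)
  case (fields a b c)
  assume "y \<in> monomial_exponents k"
  then have "k = xyz_deg (odd a) (odd b) (odd c) + (2 * (c div 2) + (2 * (b div 2) + 2 * (a div 2)))"
    using fields xyz_deg_odd[of a b c] by (simp add: monomial_exponents_def algebra_simps)
  moreover have "dual_mon y \<in> ncpoly_deg (xyz_deg (odd a) (odd b) (odd c) + (2 * (c div 2) + (2 * (b div 2) + 2 * (a div 2))))"
    unfolding fields dual_mon_def
    using ncpoly_deg_xyz ncpoly_deg_nc_pow[OF ncpoly_deg_alpha] ncpoly_deg_nc_pow[OF ncpoly_deg_beta]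
      ncpoly_deg_nc_pow[OF ncpoly_deg_gamma]
    by (auto intro!: ncpoly_deg_mult)
  ultimately show ?thesis by simp
qed

lemma dual_mon_independent_mod_I:
  assumes "(\<Sum>y\<in>monomial_exponents k. c y *: dual_mon y) \<in> I"
  shows "\<forall>y\<in>monomial_exponents k. c y = 0"
proof
  fix y0 assume y0: "y0 \<in> monomial_exponents k"
  let ?v = "unit_vec (0,0,0,False,False,False)"
  obtain d where d: "\<And>y. d y \<noteq> 0" "\<And>y. rep t (dual_mon y) ?v = (\<lambda>q. d y * unit_vec (exponent_idx y) q)"
    using rep_dual_mon unfolding unit_multiple_def by metis
  have "rep t (\<Sum>y\<in>monomial_exponents k. c y *: dual_mon y) ?v
      = (\<lambda>q. \<Sum>y\<in>monomial_exponents k. c y * rep t (dual_mon y) ?v q)"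
    by (rule rep_sum_scale[OF finite_monomial_exponents]) (auto simp: ncpoly_dual_mon)
  then have vanish: "(\<lambda>q. \<Sum>y\<in>monomial_exponents k. c y * rep t (dual_mon y) ?v q) = (\<lambda>q. 0)"
    using rep_I[OF assms] by simp
  have "(\<Sum>y\<in>monomial_exponents k. c y * (d y * unit_vec (exponent_idx y) (exponent_idx y0))) = 0"
    using fun_cong[OF vanish, of "exponent_idx y0"] by (simp add: d(2))
  moreover have "unit_vec (exponent_idx y) (exponent_idx y0) = (if y = y0 then 1 else 0)" for y
    by (auto simp: unit_vec_def dest: injD[OF inj_exponent_idx])
  ultimately have "c y0 * d y0 = 0"
    using y0 finite_monomial_exponents by (simp add: if_distrib sum.delta' cong: if_cong)
  with d(1) show "c y0 = 0" by simp
qed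

section \<open>Counting dimensions\<close>

lemma dim_ncpoly_deg:
  "ncv.dim (ncpoly_deg k) = ncv.dim (I \<inter> ncpoly_deg k) + card (monomial_exponents k)"
proof (rule antisym)
  have "ncv.dim (ncpoly_deg k) \<le> ncv.dim (I \<inter> ncpoly_deg k) + card (normal_mon ` monomial_exponents k)"
    using ncpoly_deg_subset_span_words finite_words
    by (intro ncv.dim_le_dim_add_card[OF ncpoly_deg_subset_span]) (auto simp: finite_monomial_exponents)
  also have "\<dots> \<le> ncv.dim (I \<inter> ncpoly_deg k) + card (monomial_exponents k)"
    using card_image_le[OF finite_monomial_exponents] by simp
  finally show "ncv.dim (ncpoly_deg k) \<le> ncv.dim (I \<inter> ncpoly_deg k) + card (monomial_exponents k)" .
next
  have "ncv.span (I \<inter> ncpoly_deg k) \<subseteq> I"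
    using nc_ideal_subspace by (intro ncv.span_minimal) auto
  then show "ncv.dim (I \<inter> ncpoly_deg k) + card (monomial_exponents k) \<le> ncv.dim (ncpoly_deg k)"
    using ncpoly_deg_dual_mon ncpoly_deg_subset_span_words finite_words dual_mon_independent_mod_I
    by (intro ncv.dim_add_card_le[OF finite_monomial_exponents, where b = dual_mon and W = "nc_mon ` words k"])
      auto
qed

lemma quot_dim_T_rels: "quot_dim (T_rels \<omega> t) k = (k + 1) * (k + 2) div 2"
  unfolding quot_dim_def using dim_ncpoly_deg[of k] card_monomial_exponents[of k] by simp

end

lemma fps_one_over_one_minus_X_cube:
  "1 / (1 - fps_X) ^ 3 = Abs_fps (\<lambda>k. of_nat ((k + 1) * (k + 2) div 2) :: complex)"
proof -
  have "1 / (1 - fps_X) ^ 3 = inverse ((1 - fps_X)^2 * (1 - fps_X :: complex fps))"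
    by (simp add: fps_divide_unit power2_eq_square power3_eq_cube)
  also have "\<dots> = Abs_fps (\<lambda>n. of_nat (n + 1)) * Abs_fps (\<lambda>n. 1)"
    by (simp add: fps_inverse_mult fps_one_over_one_minus_fps_X_squared fps_inverse_one_minus_fps_X)
  also have "\<dots> = Abs_fps (\<lambda>k. of_nat ((k + 1) * (k + 2) div 2))"
  proof (rule fps_ext)
    fix k :: nat
    have "2 * (\<Sum>i=0..k. i + 1) = (k + 1) * (k + 2)"
      by (induction k) auto
    have "(\<Sum>i=0..k. of_nat (i + 1) :: complex) = of_nat (\<Sum>i=0..k. i + 1)"
      by simp
    also have "(\<Sum>i=0..k. i + 1) = (k + 1) * (k + 2) div 2"
      using \<open>2 * (\<Sum>i=0..k. i + 1) = (k + 1) * (k + 2)\<close> by simp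
    finally have "(\<Sum>i=0..k. of_nat (i + 1) :: complex) = of_nat ((k + 1) * (k + 2) div 2)" .
    then show "fps_nth (Abs_fps (\<lambda>n. of_nat (n + 1)) * Abs_fps (\<lambda>n. 1)) k
        = fps_nth (Abs_fps (\<lambda>k. of_nat ((k + 1) * (k + 2) div 2) :: complex)) k"
      by (simp add: fps_mult_nth)
  qed
  finally show ?thesis .
qed

theorem mainTheorem1:
  fixes \<omega> t :: complex
  assumes "\<omega> ^ 3 = 1" and "\<omega> \<noteq> 1"
    and "t \<noteq> 0"
  shows "hilbert_series (T_rels \<omega> t) = 1 / (1 - fps_X) ^ 3"
proof -
  interpret T_algebra \<omega> t using assms by unfold_locales
  show ?thesis
    unfolding hilbert_series_def fps_one_over_one_minus_X_cube by (simp add: quot_dim_T_rels)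
qed

end
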